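(* Let $(\mathcal V,g)$ be a spacetime and let $\vec\xi$ be a Killing vector field on it. Then the Bel tensor $B_{\alpha\beta\lambda\mu}$ satisfies $$ \xi^\alpha \xi^\beta \xi^\lambda B_{\alpha \beta\lambda [\mu} \xi_{\gamma]}= \frac{3}{2}\left\{ \xi_\lambda \xi_\beta R^{\lambda\sigma\beta\tau} \nabla_\tau \left( \xi_{[\mu}\nabla_{\sigma}\xi_{\gamma]}\right)+ \xi^\beta {R^{\rho\tau\sigma}}_{[\mu} \xi_{\gamma]} \nabla_\sigma \left(\xi_{[\rho} \nabla_{\tau}\xi_{\beta]} \right) \right\}, $$ where in $\xi_{[\mu}\nabla_{\sigma}\xi_{\gamma]}$ the antisymmetrization is over the three indices $\mu,\sigma,\gamma$ (i.e. this is, up to a constant factor, the 3-form $\bm\xi\wedge d\bm\xi$), and similarly $\xi_{[\rho}\nabla_\tau\xi_{\beta]}$ is antisymmetrized over $\rho,\tau,\beta$.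
   Context: A spacetime is a 4-dimensional manifold with a Lorentzian metric $g$ of signature $(-,+,+,+)$, Levi-Civita connection $\nabla$, Riemann tensor $R_{\alpha\beta\lambda\mu}$ with the convention that for every Killing vector field $\vec\xi$ ($\nabla_{(\alpha}\xi_{\beta)}=0$) one has $\nabla_\alpha\nabla_\beta\xi_\lambda=\xi_\rho R^{\rho}{}_{\alpha\beta\lambda}$. Square brackets denote antisymmetrization and round brackets symmetrization (with weight $1/n!$). Indices are raised and lowered with $g$; $\bm\xi$ denotes the 1-form metrically associated with $\vec\xi$. The Bel tensor is $$B_{\alpha\beta\lambda\mu}= R_{\alpha\rho\lambda\sigma} R_{\beta}{}^{\rho}{}_{\mu}{}^{\sigma} +R_{\alpha\rho\mu\sigma} R_{\beta}{}^{\rho}{}_{\lambda}{}^{\sigma} -\tfrac{1}{2}g_{\alpha\beta} R_{\rho\tau\lambda\sigma}R^{\rho\tau}{}_{\mu}{}^{\sigma} -\tfrac{1}{2}g_{\lambda\mu} R_{\alpha\rho\sigma\tau}R_{\beta}{}^{\rho\sigma\tau}+ \tfrac{1}{8}g_{\alpha\beta}g_{\lambda\mu} R_{\rho\tau\sigma\nu} R^{\rho\tau\sigma\nu}.$$ *)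

theory Defs
  imports "HOL-Analysis.Analysis"
begin

text \<open>Local coordinate description of a spacetime: an open set U of R^4 (a chart),
  the metric components g x $ a $ b, indices ranging over the 4-element type 4.\<close>

type_synonym pt = "real ^ 4"

definition pd :: "4 \<Rightarrow> (pt \<Rightarrow> real) \<Rightarrow> pt \<Rightarrow> real" where
  "pd i f x = frechet_derivative f (at x) (axis i 1)"

fun pds :: "4 list \<Rightarrow> (pt \<Rightarrow> real) \<Rightarrow> pt \<Rightarrow> real" where
  "pds [] f = f"
| "pds (i # is) f = pd i (pds is f)"

definition smooth_on :: "pt set \<Rightarrow> (pt \<Rightarrow> real) \<Rightarrow> bool" where
  "smooth_on U f \<longleftrightarrow> (\<forall>is. \<forall>x\<in>U. pds is f differentiable (at x))"

definition minkowski :: "real ^ 4 ^ 4" where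
  "minkowski = (\<chi> a b. if a = b then (if a = 0 then -1 else 1) else 0)"

definition lorentzian_metric :: "pt set \<Rightarrow> (pt \<Rightarrow> real ^ 4 ^ 4) \<Rightarrow> bool" where
  "lorentzian_metric U g \<longleftrightarrow> open U \<and>
     (\<forall>a b. smooth_on U (\<lambda>x. g x $ a $ b)) \<and>
     (\<forall>x\<in>U. transpose (g x) = g x \<and>
        (\<exists>P. invertible P \<and> transpose P ** g x ** P = minkowski))"

definition ginv :: "(pt \<Rightarrow> real ^ 4 ^ 4) \<Rightarrow> pt \<Rightarrow> 4 \<Rightarrow> 4 \<Rightarrow> real" where
  "ginv g x a b = matrix_inv (g x) $ a $ b"

definition christoffel :: "(pt \<Rightarrow> real ^ 4 ^ 4) \<Rightarrow> pt \<Rightarrow> 4 \<Rightarrow> 4 \<Rightarrow> 4 \<Rightarrow> real" where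
  "christoffel g x k i j = (1/2) * (\<Sum>l\<in>UNIV. ginv g x k l *
     (pd i (\<lambda>y. g y $ l $ j) x + pd j (\<lambda>y. g y $ l $ i) x - pd l (\<lambda>y. g y $ i $ j) x))"

text \<open>Covariant tensor fields are given by their components T x is, indexed by lists.
  Levi-Civita covariant derivative: (cov g T) x (a # is) = nabla_a T_{is}.\<close>
definition cov :: "(pt \<Rightarrow> real ^ 4 ^ 4) \<Rightarrow> (pt \<Rightarrow> 4 list \<Rightarrow> real) \<Rightarrow> pt \<Rightarrow> 4 list \<Rightarrow> real" where
  "cov g T x ais = (case ais of [] \<Rightarrow> 0 | a # is \<Rightarrow>
     pd a (\<lambda>y. T y is) x
     - (\<Sum>j<length is. \<Sum>e\<in>UNIV. christoffel g x e a (is ! j) * T x (is[j := e])))"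

text \<open>Riemann tensor: (nabla_a nabla_b - nabla_b nabla_a) w_c = Rm^d_{abc...} as
  riem_mixed a b c d w_d, and all-lower riem a b c d = riem_mixed a b c e g_{ed}.
  With this convention nabla_a nabla_b xi_c = xi_r R^r_{abc} for Killing xi.\<close>
definition riem_mixed :: "(pt \<Rightarrow> real ^ 4 ^ 4) \<Rightarrow> pt \<Rightarrow> 4 \<Rightarrow> 4 \<Rightarrow> 4 \<Rightarrow> 4 \<Rightarrow> real" where
  "riem_mixed g x a b c d =
     pd b (\<lambda>y. christoffel g y d a c) x - pd a (\<lambda>y. christoffel g y d b c) x
     + (\<Sum>e\<in>UNIV. christoffel g x e a c * christoffel g x d e b
                 - christoffel g x e b c * christoffel g x d e a)"

definition riem :: "(pt \<Rightarrow> real ^ 4 ^ 4) \<Rightarrow> pt \<Rightarrow> 4 \<Rightarrow> 4 \<Rightarrow> 4 \<Rightarrow> 4 \<Rightarrow> real" where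
  "riem g x a b c d = (\<Sum>e\<in>UNIV. riem_mixed g x a b c e * g x $ e $ d)"

definition bel :: "(pt \<Rightarrow> real ^ 4 ^ 4) \<Rightarrow> pt \<Rightarrow> 4 \<Rightarrow> 4 \<Rightarrow> 4 \<Rightarrow> 4 \<Rightarrow> real" where
  "bel g x al be la mu =
     (\<Sum>r\<in>UNIV. \<Sum>s\<in>UNIV. \<Sum>r'\<in>UNIV. \<Sum>s'\<in>UNIV.
        riem g x al r la s * ginv g x r r' * ginv g x s s' * riem g x be r' mu s')
   + (\<Sum>r\<in>UNIV. \<Sum>s\<in>UNIV. \<Sum>r'\<in>UNIV. \<Sum>s'\<in>UNIV.
        riem g x al r mu s * ginv g x r r' * ginv g x s s' * riem g x be r' la s')
   - (1/2) * g x $ al $ be * (\<Sum>r\<in>UNIV. \<Sum>t\<in>UNIV. \<Sum>s\<in>UNIV. \<Sum>r'\<in>UNIV. \<Sum>t'\<in>UNIV. \<Sum>s'\<in>UNIV.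
        riem g x r t la s * ginv g x r r' * ginv g x t t' * ginv g x s s' * riem g x r' t' mu s')
   - (1/2) * g x $ la $ mu * (\<Sum>r\<in>UNIV. \<Sum>s\<in>UNIV. \<Sum>t\<in>UNIV. \<Sum>r'\<in>UNIV. \<Sum>s'\<in>UNIV. \<Sum>t'\<in>UNIV.
        riem g x al r s t * ginv g x r r' * ginv g x s s' * ginv g x t t' * riem g x be r' s' t')
   + (1/8) * g x $ al $ be * g x $ la $ mu *
       (\<Sum>r\<in>UNIV. \<Sum>t\<in>UNIV. \<Sum>s\<in>UNIV. \<Sum>n\<in>UNIV. \<Sum>r'\<in>UNIV. \<Sum>t'\<in>UNIV. \<Sum>s'\<in>UNIV. \<Sum>n'\<in>UNIV.
        riem g x r t s n * ginv g x r r' * ginv g x t t' * ginv g x s s' * ginv g x n n'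
        * riem g x r' t' s' n')"

definition riem_up :: "(pt \<Rightarrow> real ^ 4 ^ 4) \<Rightarrow> pt \<Rightarrow> 4 \<Rightarrow> 4 \<Rightarrow> 4 \<Rightarrow> 4 \<Rightarrow> real" where
  "riem_up g x a b c d = (\<Sum>a'\<in>UNIV. \<Sum>b'\<in>UNIV. \<Sum>c'\<in>UNIV. \<Sum>d'\<in>UNIV.
     ginv g x a a' * ginv g x b b' * ginv g x c c' * ginv g x d d' * riem g x a' b' c' d')"

definition riem_uuud :: "(pt \<Rightarrow> real ^ 4 ^ 4) \<Rightarrow> pt \<Rightarrow> 4 \<Rightarrow> 4 \<Rightarrow> 4 \<Rightarrow> 4 \<Rightarrow> real" where
  "riem_uuud g x a b c d = (\<Sum>a'\<in>UNIV. \<Sum>b'\<in>UNIV. \<Sum>c'\<in>UNIV.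
     ginv g x a a' * ginv g x b b' * ginv g x c c' * riem g x a' b' c' d)"

definition lower :: "(pt \<Rightarrow> real ^ 4 ^ 4) \<Rightarrow> (pt \<Rightarrow> real ^ 4) \<Rightarrow> pt \<Rightarrow> 4 \<Rightarrow> real" where
  "lower g V x a = (\<Sum>b\<in>UNIV. g x $ a $ b * V x $ b)"

definition form1 :: "(pt \<Rightarrow> 4 \<Rightarrow> real) \<Rightarrow> pt \<Rightarrow> 4 list \<Rightarrow> real" where
  "form1 w x is = (case is of [a] \<Rightarrow> w x a | _ \<Rightarrow> 0)"

definition killing :: "pt set \<Rightarrow> (pt \<Rightarrow> real ^ 4 ^ 4) \<Rightarrow> (pt \<Rightarrow> real ^ 4) \<Rightarrow> bool" where
  "killing U g V \<longleftrightarrow> (\<forall>a. smooth_on U (\<lambda>x. V x $ a)) \<and>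
     (\<forall>x\<in>U. \<forall>a b. cov g (form1 (lower g V)) x [a, b] + cov g (form1 (lower g V)) x [b, a] = 0)"

definition xi_dxi :: "(pt \<Rightarrow> real ^ 4 ^ 4) \<Rightarrow> (pt \<Rightarrow> real ^ 4) \<Rightarrow> pt \<Rightarrow> 4 list \<Rightarrow> real" where
  "xi_dxi g V x is = (case is of [a, b, c] \<Rightarrow>
     (let w = lower g V x; D = (\<lambda>p q. cov g (form1 (lower g V)) x [p, q]) in
      (1/6) * (w a * D b c + w b * D c a + w c * D a b
             - w b * D a c - w a * D c b - w c * D b a))
   | _ \<Rightarrow> 0)"

end

theory Submission
  imports Defs
begin

text \<open>For a Killing field the second covariant derivative is algebraic in \<xi>:
  \<nabla>_t \<nabla>_p \<xi>_q = - R_pqtb \<xi>^b.  This follows from the antisymmetry of \<nabla>\<xi>, the Ricci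
  identity and the cyclic identity of the Riemann tensor.  Hence, at a point, both sides of the
  identity are polynomials in \<xi>, \<nabla>\<xi> and the Riemann tensor, and it reduces to tensor algebra
  using only the symmetries of the Riemann tensor and the antisymmetry of \<nabla>\<xi>: after the
  contractions with \<xi>, both sides come down to the same three contractions of the Riemann tensor
  with \<xi>, \<xi> and \<nabla>\<nabla>\<xi>, while all terms proportional to \<xi>_\<mu> drop out under the
  antisymmetrization with \<xi>_\<gamma>.  In the chart, the Ricci identity needs the symmetry of second
  partial derivatives, which is derived from the mean value theorem.\<close>

section \<open>Partial derivatives\<close>

lemma pd_eq_has_derivative: "(f has_derivative f') (at x) \<Longrightarrow> pd i f x = f' (axis i 1)"
  by (simp add: pd_def frechet_derivative_at[symmetric])

lemma pd_add:
  assumes "f differentiable (at x)" "g differentiable (at x)"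
  shows "pd i (\<lambda>y. f y + g y) x = pd i f x + pd i g x"
  using pd_eq_has_derivative[OF has_derivative_add[OF assms[unfolded frechet_derivative_works]]]
  by (simp add: pd_def)

lemma pd_diff:
  assumes "f differentiable (at x)" "g differentiable (at x)"
  shows "pd i (\<lambda>y. f y - g y) x = pd i f x - pd i g x"
  using pd_eq_has_derivative[OF has_derivative_diff[OF assms[unfolded frechet_derivative_works]]]
  by (simp add: pd_def)

lemma pd_mult:
  assumes "f differentiable (at x)" "g differentiable (at x)"
  shows "pd i (\<lambda>y. f y * g y) x = pd i f x * g x + f x * pd i g x"
  using pd_eq_has_derivative[OF has_derivative_mult[OF assms[unfolded frechet_derivative_works]]]
  by (simp add: pd_def)

lemma pd_const: "pd i (\<lambda>y. c) x = 0"
  by (subst pd_eq_has_derivative[OF has_derivative_const]) simp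

lemma pd_cmult: "f differentiable (at x) \<Longrightarrow> pd i (\<lambda>y. c * f y) x = c * pd i f x"
  using pd_mult[of "\<lambda>y. c" x f i] by (simp add: pd_const)

lemma pd_sum: "finite A \<Longrightarrow> (\<And>a. a \<in> A \<Longrightarrow> f a differentiable (at x)) \<Longrightarrow>
   pd i (\<lambda>y. \<Sum>a\<in>A. f a y) x = (\<Sum>a\<in>A. pd i (f a) x)"
proof (induction A rule: finite_induct)
  case empty then show ?case by (simp add: pd_const)
next
  case (insert a A)
  have "pd i (\<lambda>y. \<Sum>a\<in>insert a A. f a y) x = pd i (\<lambda>y. f a y + (\<Sum>a\<in>A. f a y)) x"
    using insert by simp
  also have "\<dots> = pd i (f a) x + pd i (\<lambda>y. \<Sum>a\<in>A. f a y) x"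
    using insert by (intro pd_add) (auto intro!: differentiable_sum)
  finally show ?case using insert by simp
qed

lemma pd_cong_open: assumes "open U" "x \<in> U" "\<And>y. y \<in> U \<Longrightarrow> f y = g y"
  shows "pd i f x = pd i g x"
proof -
  have "(\<lambda>f'. (f has_derivative f') (at x)) = (\<lambda>f'. (g has_derivative f') (at x))"
    using has_derivative_transform_within_open[OF _ assms(1,2), of f _ UNIV g]
      has_derivative_transform_within_open[OF _ assms(1,2), of g _ UNIV f] assms(3)
    by (auto intro!: ext)
  then show ?thesis unfolding pd_def frechet_derivative_def by simp
qed

lemma differentiable_cong_open: assumes "open U" "x \<in> U" "\<And>y. y \<in> U \<Longrightarrow> f y = g y" "f differentiable (at x)"
  shows "g differentiable (at x)"
  using assms has_derivative_transform_within_open[OF _ assms(1,2), of f _ UNIV g]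
  unfolding differentiable_def by auto

lemma second_difference_mean_value:
  fixes f :: "pt \<Rightarrow> real"
  assumes s: "0 < s"
    and fd: "\<And>t c. 0 \<le> t \<Longrightarrow> t \<le> s \<Longrightarrow> 0 \<le> c \<Longrightarrow> c \<le> s \<Longrightarrow>
      f differentiable (at (x + t *\<^sub>R axis i 1 + c *\<^sub>R axis j 1))"
  obtains t where "0 < t" "t < s"
    "f (x + s *\<^sub>R axis i 1 + s *\<^sub>R axis j 1) - f (x + s *\<^sub>R axis i 1) - f (x + s *\<^sub>R axis j 1) + f x
       = s * (pd i f (x + t *\<^sub>R axis i 1 + s *\<^sub>R axis j 1) - pd i f (x + t *\<^sub>R axis i 1))"
proof -
  define ei :: pt where "ei = axis i 1"
  define ej :: pt where "ej = axis j 1"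
  have has_derivative_line:
    "((\<lambda>t. f (x + t *\<^sub>R ei + c *\<^sub>R ej)) has_derivative (\<lambda>h. h * pd i f (x + t *\<^sub>R ei + c *\<^sub>R ej))) (at t)"
    if "0 \<le> t" "t \<le> s" "0 \<le> c" "c \<le> s" for t c
  proof -
    let ?p = "x + t *\<^sub>R ei + c *\<^sub>R ej"
    have f': "(f has_derivative frechet_derivative f (at ?p)) (at ?p)"
      using fd[OF that] by (simp add: ei_def ej_def frechet_derivative_works[symmetric])
    have line: "((\<lambda>t. x + t *\<^sub>R ei + c *\<^sub>R ej) has_derivative (\<lambda>h. h *\<^sub>R ei)) (at t)"
      by (auto intro!: derivative_eq_intros)
    have "((\<lambda>t. f (x + t *\<^sub>R ei + c *\<^sub>R ej)) has_derivative (\<lambda>h. frechet_derivative f (at ?p) (h *\<^sub>R ei))) (at t)"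
      using has_derivative_compose[OF line f'] by (simp add: o_def)
    moreover have "frechet_derivative f (at ?p) (h *\<^sub>R ei) = h * pd i f ?p" for h
    proof -
      interpret bounded_linear "frechet_derivative f (at ?p)"
        using f' by (simp add: has_derivative_bounded_linear)
      show ?thesis using scale[of h "axis i 1"] by (simp add: pd_def ei_def)
    qed
    ultimately show ?thesis by simp
  qed
  define \<phi> where "\<phi> t = f (x + t *\<^sub>R ei + s *\<^sub>R ej) - f (x + t *\<^sub>R ei + 0 *\<^sub>R ej)" for t
  define \<phi>' where "\<phi>' t = (\<lambda>h. h * (pd i f (x + t *\<^sub>R ei + s *\<^sub>R ej) - pd i f (x + t *\<^sub>R ei + 0 *\<^sub>R ej)))" for t
  have "\<exists>t\<in>{0<..<s}. \<phi> s - \<phi> 0 = \<phi>' t (s - 0)"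
  proof (rule mvt_simple[OF s])
    fix t assume t: "0 \<le> t" "t \<le> s"
    have "(\<phi> has_derivative \<phi>' t) (at t)"
      unfolding \<phi>_def \<phi>'_def using has_derivative_line[OF t, of s] has_derivative_line[OF t, of 0] s
      by (auto intro!: derivative_eq_intros simp: algebra_simps)
    then show "(\<phi> has_derivative \<phi>' t) (at t within {0..s})" by (rule has_derivative_at_withinI)
  qed
  then show ?thesis
    using that unfolding \<phi>_def \<phi>'_def ei_def ej_def by auto
qed

lemma norm_axis_combination_le: "norm (t *\<^sub>R axis i 1 + c *\<^sub>R axis j 1 :: real ^ 'n) \<le> \<bar>t\<bar> + \<bar>c\<bar>"
  using norm_triangle_ineq[of "t *\<^sub>R axis i 1" "c *\<^sub>R axis j 1 :: real ^ 'n"] by simp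

lemma linear_approximation_difference:
  fixes \<phi> :: "'a::real_normed_vector \<Rightarrow> real"
  assumes "bounded_linear L"
    and approx: "\<And>y. norm (y - x) < d \<Longrightarrow> \<bar>\<phi> y - \<phi> x - L (y - x)\<bar> \<le> e * norm (y - x)"
    and "norm u < d" "norm v < d"
  shows "\<bar>\<phi> (x + u) - \<phi> (x + v) - L (u - v)\<bar> \<le> e * (norm u + norm v)"
proof -
  interpret bounded_linear L by fact
  have "\<bar>\<phi> (x + u) - \<phi> x - L u\<bar> \<le> e * norm u" "\<bar>\<phi> (x + v) - \<phi> x - L v\<bar> \<le> e * norm v"
    using approx[of "x + u"] approx[of "x + v"] assms(3,4) by simp_all
  then show ?thesis by (simp add: diff abs_le_iff algebra_simps)
qed

lemma second_difference_estimate: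
  fixes f :: "pt \<Rightarrow> real"
  assumes U: "open U" "x \<in> U" and fd: "\<And>y. y \<in> U \<Longrightarrow> f differentiable (at y)"
    and pdd: "pd i f differentiable (at x)" and e: "e > 0"
  shows "\<exists>d>0. \<forall>s. 0 < s \<and> s < d \<longrightarrow>
     \<bar>f (x + s *\<^sub>R axis i 1 + s *\<^sub>R axis j 1) - f (x + s *\<^sub>R axis i 1) - f (x + s *\<^sub>R axis j 1) + f x
       - s^2 * pd j (pd i f) x\<bar> \<le> 3 * e * s^2"
proof -
  define L where "L = frechet_derivative (pd i f) (at x)"
  have hL: "(pd i f has_derivative L) (at x)" using pdd by (simp add: L_def frechet_derivative_works[symmetric])
  then have L: "bounded_linear L" by (simp add: has_derivative_bounded_linear)
  obtain d1 where d1: "d1 > 0" "\<And>y. norm (y - x) < d1 \<Longrightarrow> \<bar>pd i f y - pd i f x - L (y - x)\<bar> \<le> e * norm (y - x)"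
    using hL e unfolding has_derivative_at_alt by (metis real_norm_def)
  obtain r where r: "r > 0" "ball x r \<subseteq> U" using U openE by blast
  show ?thesis
  proof (intro exI[of _ "min (d1/3) (r/3)"] conjI allI impI)
    show "min (d1/3) (r/3) > 0" using d1 r by simp
    fix s :: real assume s: "0 < s \<and> s < min (d1/3) (r/3)"
    have "x + t *\<^sub>R axis i 1 + c *\<^sub>R axis j 1 \<in> U" if "0 \<le> t" "t \<le> s" "0 \<le> c" "c \<le> s" for t c
    proof -
      have "norm (t *\<^sub>R axis i 1 + c *\<^sub>R axis j 1 :: pt) < r"
        using norm_axis_combination_le[of t i c j] that s by simp
      then have "dist x (x + (t *\<^sub>R axis i 1 + c *\<^sub>R axis j 1)) < r"
        by (metis add_diff_cancel_left' dist_commute dist_norm)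
      then show ?thesis using r by (auto simp: add.assoc)
    qed
    then obtain t where t: "0 < t" "t < s" and mean_value:
      "f (x + s *\<^sub>R axis i 1 + s *\<^sub>R axis j 1) - f (x + s *\<^sub>R axis i 1) - f (x + s *\<^sub>R axis j 1) + f x
         = s * (pd i f (x + t *\<^sub>R axis i 1 + s *\<^sub>R axis j 1) - pd i f (x + t *\<^sub>R axis i 1))"
      using second_difference_mean_value[of s f x i j] s fd by blast
    define u :: pt where "u = t *\<^sub>R axis i 1 + s *\<^sub>R axis j 1"
    define v :: pt where "v = t *\<^sub>R axis i 1"
    have norms: "norm u \<le> 2 * s" "norm v \<le> s"
      using norm_axis_combination_le[of t i s j] t by (auto simp: u_def v_def)
    then have "\<bar>pd i f (x + u) - pd i f (x + v) - L (u - v)\<bar> \<le> e * (norm u + norm v)"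
      using linear_approximation_difference[OF L d1(2)] s by simp
    also have "\<dots> \<le> e * (3 * s)" using norms e by (intro mult_left_mono) auto
    finally have "\<bar>s * (pd i f (x + u) - pd i f (x + v) - s * L (axis j 1))\<bar> \<le> s * (3 * e * s)"
      using s L by (simp add: u_def v_def abs_mult linear_simps)
    moreover have "pd j (pd i f) x = L (axis j 1)" by (simp add: pd_def L_def)
    ultimately show "\<bar>f (x + s *\<^sub>R axis i 1 + s *\<^sub>R axis j 1) - f (x + s *\<^sub>R axis i 1) - f (x + s *\<^sub>R axis j 1) + f x
       - s^2 * pd j (pd i f) x\<bar> \<le> 3 * e * s^2"
      unfolding mean_value by (simp add: u_def v_def add.assoc power2_eq_square algebra_simps)
  qed
qed

lemma pd_commute:
  fixes f :: "pt \<Rightarrow> real"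
  assumes U: "open U" "x \<in> U" and fd: "\<And>y. y \<in> U \<Longrightarrow> f differentiable (at y)"
    and "pd i f differentiable (at x)" "pd j f differentiable (at x)"
  shows "pd j (pd i f) x = pd i (pd j f) x"
proof (rule ccontr)
  let ?A = "pd j (pd i f) x" and ?B = "pd i (pd j f) x"
  assume ne: "?A \<noteq> ?B"
  define e where "e = \<bar>?A - ?B\<bar> / 12"
  have e: "e > 0" using ne by (simp add: e_def)
  obtain d1 where d1: "d1 > 0" "\<And>s. 0 < s \<and> s < d1 \<Longrightarrow>
     \<bar>f (x + s *\<^sub>R axis i 1 + s *\<^sub>R axis j 1) - f (x + s *\<^sub>R axis i 1) - f (x + s *\<^sub>R axis j 1) + f x
       - s^2 * ?A\<bar> \<le> 3 * e * s^2"
    using second_difference_estimate[OF U fd assms(4) e, of j] by blast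
  obtain d2 where d2: "d2 > 0" "\<And>s. 0 < s \<and> s < d2 \<Longrightarrow>
     \<bar>f (x + s *\<^sub>R axis j 1 + s *\<^sub>R axis i 1) - f (x + s *\<^sub>R axis j 1) - f (x + s *\<^sub>R axis i 1) + f x
       - s^2 * ?B\<bar> \<le> 3 * e * s^2"
    using second_difference_estimate[OF U fd assms(5) e, of i] by blast
  define s where "s = min d1 d2 / 2"
  have s: "0 < s" "s < d1" "s < d2" using d1 d2 by (auto simp: s_def)
  define Q where "Q = f (x + s *\<^sub>R axis i 1 + s *\<^sub>R axis j 1) - f (x + s *\<^sub>R axis i 1) - f (x + s *\<^sub>R axis j 1) + f x"
  have "x + s *\<^sub>R axis j 1 + s *\<^sub>R axis i 1 = x + s *\<^sub>R axis i 1 + s *\<^sub>R axis j 1"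
    by (simp add: algebra_simps)
  then have "\<bar>Q - s^2 * ?A\<bar> \<le> 3 * e * s^2" "\<bar>Q - s^2 * ?B\<bar> \<le> 3 * e * s^2"
    using d1(2)[of s] d2(2)[of s] s unfolding Q_def by (auto simp: algebra_simps)
  then have "s^2 * \<bar>?A - ?B\<bar> \<le> s^2 * (6 * e)"
    unfolding abs_mult[of "s^2", simplified, symmetric] by (simp add: abs_le_iff algebra_simps)
  then have "\<bar>?A - ?B\<bar> \<le> 6 * e" using s by simp
  then show False using e unfolding e_def by (simp add: field_simps)
qed

section \<open>Matrices\<close>

lemma det_minkowski_nonzero: "det minkowski \<noteq> 0"
proof -
  have "det minkowski = prod (\<lambda>i. minkowski $ i $ i) UNIV"
    by (rule det_diagonal) (simp add: minkowski_def)
  also have "\<dots> \<noteq> 0" by (simp add: minkowski_def)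
  finally show ?thesis .
qed

lemma invertible_if_congruent_minkowski:
  assumes "invertible P" "transpose P ** G ** P = minkowski"
  shows "invertible (G :: real^4^4)"
proof -
  have "det (transpose P ** G ** P) = det P * det G * det P"
    by (simp add: det_mul)
  then have "det G \<noteq> 0" using assms det_minkowski_nonzero by auto
  then show ?thesis by (simp add: invertible_det_nz)
qed

lemma matrix_inv_mult:
  fixes A :: "'a::semiring_1 ^ 'n ^ 'n" assumes "invertible A"
  shows "A ** matrix_inv A = mat 1" "matrix_inv A ** A = mat 1"
proof -
  have "\<exists>A'. A ** A' = mat 1 \<and> A' ** A = mat 1" using assms unfolding invertible_def by blast
  then have "A ** matrix_inv A = mat 1 \<and> matrix_inv A ** A = mat 1"
    unfolding matrix_inv_def by (rule someI_ex)
  then show "A ** matrix_inv A = mat 1" "matrix_inv A ** A = mat 1" by auto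
qed

lemma symmetric_matrix_inv:
  fixes A :: "'a::comm_semiring_1 ^ 'n ^ 'n" assumes "invertible A" "transpose A = A"
  shows "transpose (matrix_inv A) = matrix_inv A"
proof -
  have "transpose (matrix_inv A) = transpose (matrix_inv A) ** (A ** matrix_inv A)"
    using matrix_inv_mult(1)[OF assms(1)] by simp
  also have "\<dots> = (transpose (matrix_inv A) ** transpose A) ** matrix_inv A"
    using assms(2) by (simp add: matrix_mul_assoc)
  also have "transpose (matrix_inv A) ** transpose A = transpose (A ** matrix_inv A)"
    by (simp add: matrix_transpose_mul)
  also have "\<dots> = mat 1" using matrix_inv_mult(1)[OF assms(1)] by (simp add: transpose_mat)
  finally show ?thesis by simp
qed

lemma matrix_inv_cramer:
  fixes A :: "real ^ 'n ^ 'n" assumes "invertible A"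
  shows "matrix_inv A $ a $ b = det (\<chi> i j. if j = a then axis b 1 $ i else A $ i $ j) / det A"
proof -
  have d: "det A \<noteq> 0" using assms by (simp add: invertible_det_nz)
  have "A *v (matrix_inv A *v axis b 1) = axis b 1"
    by (simp add: matrix_vector_mul_assoc matrix_inv_mult[OF assms])
  then have "matrix_inv A *v axis b 1 = (\<chi> k. det (\<chi> i j. if j = k then axis b 1 $ i else A $ i $ j) / det A)"
    using cramer[OF d] by blast
  then have "(matrix_inv A *v axis b 1) $ a = det (\<chi> i j. if j = a then axis b 1 $ i else A $ i $ j) / det A"
    by simp
  moreover have "(matrix_inv A *v axis b 1) $ a = matrix_inv A $ a $ b"
    by (simp add: matrix_vector_mult_basis column_def)
  ultimately show ?thesis by simp
qed

lemma differentiable_prod: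
  fixes f :: "'i \<Rightarrow> 'a::real_normed_vector \<Rightarrow> real"
  shows "finite I \<Longrightarrow> (\<And>i. i \<in> I \<Longrightarrow> f i differentiable (at x)) \<Longrightarrow>
    (\<lambda>y. \<Prod>i\<in>I. f i y) differentiable (at x)"
  by (induction I rule: finite_induct) auto

lemma differentiable_det:
  fixes M :: "'a::real_normed_vector \<Rightarrow> real ^ 'n ^ 'n"
  assumes "\<And>i j. (\<lambda>y. M y $ i $ j) differentiable (at x)"
  shows "(\<lambda>y. det (M y)) differentiable (at x)"
  unfolding det_def
  by (intro differentiable_sum differentiable_mult differentiable_const) (auto intro!: differentiable_prod assms)

section \<open>Coordinate expressions of curvature\<close>

definition christoffel1 :: "(pt \<Rightarrow> real ^ 4 ^ 4) \<Rightarrow> 4 \<Rightarrow> 4 \<Rightarrow> 4 \<Rightarrow> pt \<Rightarrow> real" where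
  "christoffel1 g d a c y = (1/2) * (pd a (\<lambda>y. g y $ d $ c) y + pd c (\<lambda>y. g y $ d $ a) y - pd d (\<lambda>y. g y $ a $ c) y)"

lemma christoffel_eq_christoffel1: "christoffel g y k a c = (\<Sum>l\<in>UNIV. ginv g y k l * christoffel1 g l a c y)"
  unfolding christoffel_def christoffel1_def by (simp add: sum_distrib_left mult_ac)

text \<open>In the following coordinate identities \<open>G e a b\<close> and \<open>dG t e a b\<close> stand for the Christoffel
  symbols \<open>\<Gamma>^e_ab\<close> and their partial derivatives \<open>\<partial>_t \<Gamma>^e_ab\<close> at a point, and \<open>W\<close>, \<open>dW\<close>, \<open>ddW\<close>
  for a 1-form and its first and second partial derivatives.\<close>

lemma ricci_identity_christoffel:
  fixes G :: "'n::finite \<Rightarrow> 'n \<Rightarrow> 'n \<Rightarrow> real" and dG :: "'n \<Rightarrow> 'n \<Rightarrow> 'n \<Rightarrow> 'n \<Rightarrow> real"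
    and W :: "'n \<Rightarrow> real" and dW :: "'n \<Rightarrow> 'n \<Rightarrow> real"
  assumes Gs: "\<And>e a b. G e a b = G e b a" and ds: "ddW t p q = ddW p t q"
  defines "D \<equiv> \<lambda>a b. dW a b - (\<Sum>e\<in>UNIV. G e a b * W e)"
  shows "(ddW t p q - (\<Sum>e\<in>UNIV. dG t e p q * W e + G e p q * dW t e)
           - (\<Sum>e\<in>UNIV. G e t p * D e q) - (\<Sum>e\<in>UNIV. G e t q * D p e))
       - (ddW p t q - (\<Sum>e\<in>UNIV. dG p e t q * W e + G e t q * dW p e)
           - (\<Sum>e\<in>UNIV. G e p t * D e q) - (\<Sum>e\<in>UNIV. G e p q * D t e))
       = (\<Sum>d\<in>UNIV. (dG p d t q - dG t d p q
            + (\<Sum>e\<in>UNIV. G e t q * G d e p - G e p q * G d e t)) * W d)"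
proof -
  have R: "(\<Sum>d\<in>UNIV. (dG p d t q - dG t d p q
            + (\<Sum>e\<in>UNIV. G e t q * G d e p - G e p q * G d e t)) * W d)
     = (\<Sum>d\<in>UNIV. (dG p d t q - dG t d p q) * W d)
       + (\<Sum>e\<in>UNIV. \<Sum>n\<in>UNIV. G e t q * (G n p e * W n)) - (\<Sum>e\<in>UNIV. \<Sum>n\<in>UNIV. G e p q * (G n t e * W n))"
    by (simp add: sum_distrib_left sum_distrib_right sum_subtractf left_diff_distrib distrib_right sum.distrib)
      (subst (1 2) sum.swap, simp add: Gs[of _ _ p] Gs[of _ _ t] mult.assoc)
  have L: "(ddW t p q - (\<Sum>e\<in>UNIV. dG t e p q * W e + G e p q * dW t e)
           - (\<Sum>e\<in>UNIV. G e t p * D e q) - (\<Sum>e\<in>UNIV. G e t q * D p e))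
       - (ddW p t q - (\<Sum>e\<in>UNIV. dG p e t q * W e + G e t q * dW p e)
           - (\<Sum>e\<in>UNIV. G e p t * D e q) - (\<Sum>e\<in>UNIV. G e p q * D t e))
     = (\<Sum>d\<in>UNIV. (dG p d t q - dG t d p q) * W d)
       + (\<Sum>e\<in>UNIV. \<Sum>n\<in>UNIV. G e t q * (G n p e * W n)) - (\<Sum>e\<in>UNIV. \<Sum>n\<in>UNIV. G e p q * (G n t e * W n))"
    unfolding D_def using ds
    by (simp add: Gs[of _ p t] sum_subtractf sum.distrib right_diff_distrib sum_distrib_left left_diff_distrib)
  show ?thesis using L R by simp
qed

lemma riemann_cyclic_christoffel:
  fixes G :: "'n::finite \<Rightarrow> 'n \<Rightarrow> 'n \<Rightarrow> real" and dG :: "'n \<Rightarrow> 'n \<Rightarrow> 'n \<Rightarrow> 'n \<Rightarrow> real"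
  assumes Gs: "\<And>e a b. G e a b = G e b a" and dGs: "\<And>t e a b. dG t e a b = dG t e b a"
  defines "RM \<equiv> \<lambda>a b c d. dG b d a c - dG a d b c + (\<Sum>e\<in>UNIV. G e a c * G d e b - G e b c * G d e a)"
  shows "RM a b c d + RM b c a d + RM c a b d = 0"
proof -
  have "RM a b c d + RM b c a d + RM c a b d = (\<Sum>e\<in>UNIV. (G e a c * G d e b - G e b c * G d e a)
     + (G e b a * G d e c - G e c a * G d e b) + (G e c b * G d e a - G e a b * G d e c))"
    unfolding RM_def using dGs[of b d a c] dGs[of a d b c] dGs[of c d b a]
    by (simp add: sum.distrib sum_subtractf algebra_simps)
  also have "\<dots> = 0" using Gs[of _ a c] Gs[of _ b c] Gs[of _ a b] by (simp add: algebra_simps)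
  finally show ?thesis .
qed

text \<open>Here \<open>Gf\<close>, \<open>dGf\<close> are the Christoffel symbols of the first kind and their derivatives,
  \<open>gx\<close>, \<open>dg\<close> the metric and its derivatives; the hypotheses are metric compatibility.\<close>

lemma riemann_lower_christoffel:
  fixes G :: "'n::finite \<Rightarrow> 'n \<Rightarrow> 'n \<Rightarrow> real" and dG :: "'n \<Rightarrow> 'n \<Rightarrow> 'n \<Rightarrow> 'n \<Rightarrow> real"
  assumes A: "\<And>b d a c. (\<Sum>e\<in>UNIV. gx d e * dG b e a c) = dGf b d a c - (\<Sum>e\<in>UNIV. dg b d e * G e a c)"
    and B: "\<And>f b d. (\<Sum>e\<in>UNIV. G e f b * gx e d) = Gf d f b"
    and C: "\<And>b d e. dg b d e = Gf e b d + Gf d b e"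
    and D: "\<And>d b e. Gf d b e = Gf d e b"
    and gs: "\<And>a b. gx a b = gx b a"
  shows "(\<Sum>e\<in>UNIV. (dG b e a c - dG a e b c + (\<Sum>f\<in>UNIV. G f a c * G e f b - G f b c * G e f a)) * gx e d)
    = dGf b d a c - dGf a d b c - (\<Sum>e\<in>UNIV. Gf e b d * G e a c) + (\<Sum>e\<in>UNIV. Gf e a d * G e b c)"
proof -
  have 1: "(\<Sum>e\<in>UNIV. (\<Sum>f\<in>UNIV. G f a c * G e f b) * gx e d) = (\<Sum>f\<in>UNIV. G f a c * Gf d f b)" for a b c
  proof -
    have "(\<Sum>e\<in>UNIV. (\<Sum>f\<in>UNIV. G f a c * G e f b) * gx e d) = (\<Sum>f\<in>UNIV. \<Sum>e\<in>UNIV. G f a c * (G e f b * gx e d))"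
      by (subst sum.swap) (simp add: sum_distrib_right mult.assoc)
    also have "\<dots> = (\<Sum>f\<in>UNIV. G f a c * Gf d f b)" by (simp add: sum_distrib_left[symmetric] B)
    finally show ?thesis .
  qed
  have 2: "(\<Sum>e\<in>UNIV. dG b e a c * gx e d) = dGf b d a c - (\<Sum>e\<in>UNIV. dg b d e * G e a c)" for b a c
    using A[of d b a c] by (simp add: gs mult.commute)
  have 3: "(\<Sum>e\<in>UNIV. dg b d e * G e a c) = (\<Sum>e\<in>UNIV. Gf e b d * G e a c) + (\<Sum>f\<in>UNIV. G f a c * Gf d f b)" for b a c
    by (simp add: C D[of d b] sum.distrib algebra_simps)
  have E: "(\<Sum>e\<in>UNIV. (dG b e a c - dG a e b c + (\<Sum>f\<in>UNIV. G f a c * G e f b - G f b c * G e f a)) * gx e d)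
    = (\<Sum>e\<in>UNIV. dG b e a c * gx e d) - (\<Sum>e\<in>UNIV. dG a e b c * gx e d)
      + (\<Sum>e\<in>UNIV. (\<Sum>f\<in>UNIV. G f a c * G e f b) * gx e d) - (\<Sum>e\<in>UNIV. (\<Sum>f\<in>UNIV. G f b c * G e f a) * gx e d)"
    by (simp add: sum.distrib sum_subtractf left_diff_distrib distrib_right)
  show ?thesis
    unfolding E 1 2 3 by linarith
qed

lemma sum_sym_bilinear_swap:
  fixes h :: "'n::finite \<Rightarrow> 'n \<Rightarrow> real"
  assumes "\<And>a b. h a b = h b a"
  shows "(\<Sum>e\<in>UNIV. X e * (\<Sum>l\<in>UNIV. h e l * Y l)) = (\<Sum>e\<in>UNIV. Y e * (\<Sum>l\<in>UNIV. h e l * X l))"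
  unfolding sum_distrib_left by (subst sum.swap) (simp add: assms mult_ac)

lemma cov_xi_dxi_algebraic:
  fixes G :: "'n::finite \<Rightarrow> 'n \<Rightarrow> 'n \<Rightarrow> real" and W :: "'n \<Rightarrow> real"
  assumes dW: "\<And>t a. dW t a = D t a + (\<Sum>e\<in>UNIV. G e t a * W e)"
    and pdD: "\<And>t b c. pdD t b c = K t b c + (\<Sum>e\<in>UNIV. G e t b * D e c) + (\<Sum>e\<in>UNIV. G e t c * D b e)"
  defines "om \<equiv> \<lambda>a b c. (1/6) * (W a * D b c + W b * D c a + W c * D a b - W b * D a c - W a * D c b - W c * D b a)"
  shows "(1/6) * ((dW t a * D b c + W a * pdD t b c) + (dW t b * D c a + W b * pdD t c a)
      + (dW t c * D a b + W c * pdD t a b) - (dW t b * D a c + W b * pdD t a c)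
      - (dW t a * D c b + W a * pdD t c b) - (dW t c * D b a + W c * pdD t b a))
    - ((\<Sum>e\<in>UNIV. G e t a * om e b c) + (\<Sum>e\<in>UNIV. G e t b * om a e c) + (\<Sum>e\<in>UNIV. G e t c * om a b e))
   = (1/6) * (D t a * D b c + D t b * D c a + D t c * D a b - D t b * D a c - D t a * D c b - D t c * D b a
      + W a * K t b c + W b * K t c a + W c * K t a b - W b * K t a c - W a * K t c b - W c * K t b a)"
  unfolding om_def dW pdD
  by (simp add: sum.distrib sum_subtractf sum_distrib_left sum_distrib_right algebra_simps)

section \<open>The Killing field in a chart\<close>

lemma smooth_on_differentiable: "smooth_on U f \<Longrightarrow> y \<in> U \<Longrightarrow> f differentiable (at y)"
  unfolding smooth_on_def using pds.simps(1) by metis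

lemma smooth_on_pd_differentiable: "smooth_on U f \<Longrightarrow> y \<in> U \<Longrightarrow> pd i f differentiable (at y)"
  unfolding smooth_on_def by (metis pds.simps)

locale killing_chart =
  fixes U g V x
  assumes lorentzian: "lorentzian_metric U g" and killing_V: "killing U g V" and x_in_U: "x \<in> U"
begin

abbreviation nabla_xi :: "pt \<Rightarrow> 4 \<Rightarrow> 4 \<Rightarrow> real" where
  "nabla_xi y p q \<equiv> cov g (form1 (lower g V)) y [p, q]"

abbreviation nabla2_xi :: "4 \<Rightarrow> 4 \<Rightarrow> 4 \<Rightarrow> real" where
  "nabla2_xi t p q \<equiv> cov g (cov g (form1 (lower g V))) x [t, p, q]"

lemma open_U: "open U" using lorentzian by (simp add: lorentzian_metric_def)

lemma smooth_metric: "smooth_on U (\<lambda>y. g y $ a $ b)" using lorentzian by (simp add: lorentzian_metric_def)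

lemma smooth_V: "smooth_on U (\<lambda>y. V y $ a)" using killing_V by (simp add: killing_def)

lemma metric_sym: "y \<in> U \<Longrightarrow> g y $ a $ b = g y $ b $ a"
proof -
  assume y: "y \<in> U"
  have "transpose (g y) = g y" using lorentzian y unfolding lorentzian_metric_def by blast
  then have "transpose (g y) $ b $ a = g y $ b $ a" by simp
  then show ?thesis by (simp add: transpose_def)
qed

lemma metric_invertible: "y \<in> U \<Longrightarrow> invertible (g y)"
  using lorentzian unfolding lorentzian_metric_def by (metis invertible_if_congruent_minkowski)

lemma metric_ginv: "y \<in> U \<Longrightarrow> (\<Sum>b\<in>UNIV. g y $ a $ b * ginv g y b c) = (if a = c then 1 else 0)"
  using matrix_inv_mult(1)[OF metric_invertible, of y] unfolding ginv_def
  by (auto simp: matrix_matrix_mult_def mat_def vec_eq_iff)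

lemma ginv_sym: "y \<in> U \<Longrightarrow> ginv g y a b = ginv g y b a"
proof -
  assume y: "y \<in> U"
  have "transpose (g y) = g y" using lorentzian y unfolding lorentzian_metric_def by blast
  then have "transpose (matrix_inv (g y)) = matrix_inv (g y)" using symmetric_matrix_inv metric_invertible y by blast
  then have "transpose (matrix_inv (g y)) $ a $ b = matrix_inv (g y) $ a $ b" by simp
  then show ?thesis unfolding ginv_def by (simp add: transpose_def)
qed

lemma pd_metric_sym: "y \<in> U \<Longrightarrow> pd i (\<lambda>y. g y $ a $ b) y = pd i (\<lambda>y. g y $ b $ a) y"
  using pd_cong_open[OF open_U, of y "\<lambda>y. g y $ a $ b" "\<lambda>y. g y $ b $ a"] metric_sym by blast

lemma differentiable_metric: "y \<in> U \<Longrightarrow> (\<lambda>y. g y $ a $ b) differentiable (at y)"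
  using smooth_on_differentiable[OF smooth_metric] .

lemma differentiable_pd_metric: "y \<in> U \<Longrightarrow> pd i (\<lambda>y. g y $ a $ b) differentiable (at y)"
  using smooth_on_pd_differentiable[OF smooth_metric] .

lemma differentiable_V: "y \<in> U \<Longrightarrow> (\<lambda>y. V y $ a) differentiable (at y)"
  using smooth_on_differentiable[OF smooth_V] .

lemma differentiable_pd_V: "y \<in> U \<Longrightarrow> pd i (\<lambda>y. V y $ a) differentiable (at y)"
  using smooth_on_pd_differentiable[OF smooth_V] .

lemma differentiable_ginv: "(\<lambda>y. ginv g y a b) differentiable (at x)"
proof (rule differentiable_cong_open[OF open_U x_in_U])
  show "(\<lambda>y. det (\<chi> i j. if j = a then axis b 1 $ i else g y $ i $ j) / det (g y)) differentiable (at x)"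
  proof (rule differentiable_divide)
    show "(\<lambda>y. det (\<chi> i j. if j = a then axis b 1 $ i else g y $ i $ j)) differentiable (at x)"
      apply (rule differentiable_det)
      subgoal for i j by (cases "j = a") (auto intro: differentiable_metric[OF x_in_U])
      done
    show "(\<lambda>y. det (g y)) differentiable (at x)"
      by (rule differentiable_det) (auto intro: differentiable_metric[OF x_in_U])
    show "det (g x) \<noteq> 0" using metric_invertible[OF x_in_U] by (simp add: invertible_det_nz)
  qed
  fix y assume "y \<in> U"
  then show "det (\<chi> i j. if j = a then axis b 1 $ i else g y $ i $ j) / det (g y) = ginv g y a b"
    using matrix_inv_cramer[OF metric_invertible] by (simp add: ginv_def)
qed

lemma differentiable_christoffel: "(\<lambda>y. christoffel g y k i j) differentiable (at x)"
  unfolding christoffel_def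
  by (auto intro!: differentiable_sum differentiable_mult differentiable_const differentiable_add differentiable_diff
      differentiable_divide differentiable_ginv differentiable_pd_metric x_in_U)

lemma christoffel_sym: "y \<in> U \<Longrightarrow> christoffel g y k i j = christoffel g y k j i"
  unfolding christoffel_def using pd_metric_sym[of y] by (simp add: algebra_simps)

lemma differentiable_xi: "y \<in> U \<Longrightarrow> (\<lambda>y. lower g V y a) differentiable (at y)"
  unfolding lower_def by (auto intro!: differentiable_sum differentiable_mult differentiable_metric differentiable_V)

lemma pd_xi: "y \<in> U \<Longrightarrow> pd k (\<lambda>y. lower g V y a) y =
   (\<Sum>b\<in>UNIV. pd k (\<lambda>y. g y $ a $ b) y * V y $ b + g y $ a $ b * pd k (\<lambda>y. V y $ b) y)"
  unfolding lower_def
  by (subst pd_sum) (auto intro!: differentiable_mult differentiable_metric differentiable_V simp: pd_mult differentiable_metric differentiable_V)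

lemma differentiable_pd_xi: "pd k (\<lambda>y. lower g V y a) differentiable (at x)"
proof (rule differentiable_cong_open[OF open_U x_in_U])
  show "(\<lambda>y. \<Sum>b\<in>UNIV. pd k (\<lambda>y. g y $ a $ b) y * V y $ b + g y $ a $ b * pd k (\<lambda>y. V y $ b) y) differentiable (at x)"
    by (auto intro!: differentiable_sum differentiable_mult differentiable_add differentiable_metric
        differentiable_V differentiable_pd_metric differentiable_pd_V x_in_U)
  show "y \<in> U \<Longrightarrow> (\<Sum>b\<in>UNIV. pd k (\<lambda>y. g y $ a $ b) y * V y $ b + g y $ a $ b * pd k (\<lambda>y. V y $ b) y) =
     pd k (\<lambda>y. lower g V y a) y" for y using pd_xi by simp
qed

lemma cov_xi: "nabla_xi y p q =
   pd p (\<lambda>y. lower g V y q) y - (\<Sum>e\<in>UNIV. christoffel g y e p q * lower g V y e)"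
proof -
  have "nabla_xi y p q = pd p (\<lambda>y. form1 (lower g V) y [q]) y
     - (\<Sum>j<length [q]. \<Sum>e\<in>UNIV. christoffel g y e p ([q] ! j) * form1 (lower g V) y ([q][j := e]))"
    unfolding cov_def by simp
  also have "(\<lambda>y. form1 (lower g V) y [q]) = (\<lambda>y. lower g V y q)" by (simp add: form1_def)
  also have "(\<Sum>j<length [q]. \<Sum>e\<in>UNIV. christoffel g y e p ([q] ! j) * form1 (lower g V) y ([q][j := e]))
     = (\<Sum>e\<in>UNIV. christoffel g y e p q * lower g V y e)" by (simp add: form1_def)
  finally show ?thesis .
qed

lemma differentiable_cov_xi: "(\<lambda>y. nabla_xi y p q) differentiable (at x)"
  unfolding cov_xi
  by (auto intro!: differentiable_sum differentiable_mult differentiable_diff differentiable_pd_xi differentiable_christoffel differentiable_xi x_in_U)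

lemma cov_cov_xi: "nabla2_xi t p q =
   pd t (\<lambda>y. nabla_xi y p q) x
   - (\<Sum>e\<in>UNIV. christoffel g x e t p * nabla_xi x e q)
   - (\<Sum>e\<in>UNIV. christoffel g x e t q * nabla_xi x p e)"
  by (simp add: cov_def[of g "cov g (form1 (lower g V))"] numeral_2_eq_2 lessThan_Suc sum.distrib)

lemma pd_cov_xi: "pd t (\<lambda>y. nabla_xi y p q) x =
   pd t (pd p (\<lambda>y. lower g V y q)) x
   - (\<Sum>e\<in>UNIV. pd t (\<lambda>y. christoffel g y e p q) x * lower g V x e
        + christoffel g x e p q * pd t (\<lambda>y. lower g V y e) x)"
proof -
  have "(\<lambda>y. nabla_xi y p q) =
     (\<lambda>y. pd p (\<lambda>y. lower g V y q) y - (\<Sum>e\<in>UNIV. christoffel g y e p q * lower g V y e))"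
    by (rule ext, rule cov_xi)
  then show ?thesis
    by (simp add: pd_diff pd_sum pd_mult differentiable_pd_xi differentiable_christoffel differentiable_xi x_in_U differentiable_sum)
qed

lemma cov_cov_xi_anti: "nabla2_xi t p q + nabla2_xi t q p = 0"
proof -
  have killing_eq: "y \<in> U \<Longrightarrow> nabla_xi y a b + nabla_xi y b a = 0" for y a b
    using killing_V unfolding killing_def by blast
  have "pd t (\<lambda>y. nabla_xi y p q) x + pd t (\<lambda>y. nabla_xi y q p) x
     = pd t (\<lambda>y. nabla_xi y p q + nabla_xi y q p) x"
    by (simp add: pd_add differentiable_cov_xi)
  also have "\<dots> = pd t (\<lambda>y. 0) x" by (rule pd_cong_open[OF open_U x_in_U]) (use killing_eq in auto)
  finally have pd_sum_zero: "pd t (\<lambda>y. nabla_xi y p q) x + pd t (\<lambda>y. nabla_xi y q p) x = 0"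
    by (simp add: pd_const)
  have nabla_xi_anti: "nabla_xi x e q = - nabla_xi x q e" for e q
    using killing_eq[OF x_in_U] by (simp add: eq_neg_iff_add_eq_0)
  show ?thesis unfolding cov_cov_xi using pd_sum_zero
    by (simp add: nabla_xi_anti[of _ p] nabla_xi_anti[of _ q] sum_negf)
qed

lemma ricci_identity: "nabla2_xi t p q - nabla2_xi p t q
   = (\<Sum>d\<in>UNIV. riem_mixed g x t p q d * lower g V x d)"
proof -
  have second_partials_commute: "pd t (pd p (\<lambda>y. lower g V y q)) x = pd p (pd t (\<lambda>y. lower g V y q)) x"
    by (rule pd_commute[OF open_U x_in_U differentiable_xi differentiable_pd_xi differentiable_pd_xi])
  have nabla_xi_eq: "nabla_xi x a b = pd a (\<lambda>y. lower g V y b) x - (\<Sum>e\<in>UNIV. christoffel g x e a b * lower g V x e)" for a b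
    by (rule cov_xi)
  have christoffel_symmetric: "christoffel g x e a b = christoffel g x e b a" for e a b by (rule christoffel_sym[OF x_in_U])
  show ?thesis
    unfolding cov_cov_xi pd_cov_xi nabla_xi_eq riem_mixed_def
    by (rule ricci_identity_christoffel[where G="christoffel g x" and ddW="\<lambda>t p q. pd t (pd p (\<lambda>y. lower g V y q)) x"
       and dG = "\<lambda>t e a b. pd t (\<lambda>y. christoffel g y e a b) x" and W = "lower g V x"
       and dW = "\<lambda>a b. pd a (\<lambda>y. lower g V y b) x", OF christoffel_symmetric second_partials_commute])
qed

lemma pd_christoffel_sym: "pd t (\<lambda>y. christoffel g y e a b) x = pd t (\<lambda>y. christoffel g y e b a) x"
  by (rule pd_cong_open[OF open_U x_in_U]) (rule christoffel_sym)

lemma riem_mixed_cyclic: "riem_mixed g x a b c d + riem_mixed g x b c a d + riem_mixed g x c a b d = 0"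
  unfolding riem_mixed_def
  by (rule riemann_cyclic_christoffel[where G="christoffel g x" and dG="\<lambda>t e a b. pd t (\<lambda>y. christoffel g y e a b) x",
        OF christoffel_sym[OF x_in_U] pd_christoffel_sym])

lemma riem_mixed_anti12: "riem_mixed g x a b c d = - riem_mixed g x b a c d"
  unfolding riem_mixed_def by (simp add: sum_subtractf)

lemma riem_cyclic: "riem g x a b c d + riem g x b c a d + riem g x c a b d = 0"
proof -
  have "riem g x a b c d + riem g x b c a d + riem g x c a b d
     = (\<Sum>e\<in>UNIV. (riem_mixed g x a b c e + riem_mixed g x b c a e + riem_mixed g x c a b e) * g x $ e $ d)"
    unfolding riem_def by (simp add: sum.distrib distrib_right)
  also have "\<dots> = 0" by (simp add: riem_mixed_cyclic)
  finally show ?thesis .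
qed

lemma riem_anti12: "riem g x a b c d = - riem g x b a c d"
  unfolding riem_def by (simp add: riem_mixed_anti12[of a b] sum_negf)

lemma metric_christoffel: "y \<in> U \<Longrightarrow> (\<Sum>e\<in>UNIV. g y $ d $ e * christoffel g y e a c) = christoffel1 g d a c y"
proof -
  assume y: "y \<in> U"
  have "(\<Sum>e\<in>UNIV. g y $ d $ e * christoffel g y e a c) = (\<Sum>l\<in>UNIV. (\<Sum>e\<in>UNIV. g y $ d $ e * ginv g y e l) * christoffel1 g l a c y)"
    unfolding christoffel_eq_christoffel1 sum_distrib_left sum_distrib_right by (subst sum.swap) (simp add: mult.assoc)
  also have "\<dots> = (\<Sum>l\<in>UNIV. (if d = l then christoffel1 g l a c y else 0))"
    by (rule sum.cong) (auto simp: metric_ginv[OF y])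
  also have "\<dots> = christoffel1 g d a c y" by simp
  finally show ?thesis .
qed

lemma differentiable_christoffel1: "(\<lambda>y. christoffel1 g d a c y) differentiable (at x)"
  unfolding christoffel1_def by (auto intro!: differentiable_divide differentiable_add differentiable_diff differentiable_pd_metric x_in_U)

lemma metric_pd_christoffel: "(\<Sum>e\<in>UNIV. g x $ d $ e * pd b (\<lambda>y. christoffel g y e a c) x)
   = pd b (christoffel1 g d a c) x - (\<Sum>e\<in>UNIV. pd b (\<lambda>y. g y $ d $ e) x * christoffel g x e a c)"
proof -
  have "pd b (christoffel1 g d a c) x = pd b (\<lambda>y. \<Sum>e\<in>UNIV. g y $ d $ e * christoffel g y e a c) x"
    by (rule pd_cong_open[OF open_U x_in_U]) (simp add: metric_christoffel)
  also have "\<dots> = (\<Sum>e\<in>UNIV. pd b (\<lambda>y. g y $ d $ e) x * christoffel g x e a c + g x $ d $ e * pd b (\<lambda>y. christoffel g y e a c) x)"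
    by (simp add: pd_sum pd_mult differentiable_metric[OF x_in_U] differentiable_christoffel differentiable_mult)
  finally show ?thesis by (simp add: sum.distrib)
qed

lemma pd_metric_eq_christoffel1: "pd b (\<lambda>y. g y $ d $ e) x = christoffel1 g e b d x + christoffel1 g d b e x"
  unfolding christoffel1_def using pd_metric_sym[OF x_in_U, of b d e] pd_metric_sym[OF x_in_U, of d e b] pd_metric_sym[OF x_in_U, of e b d]
  by (simp add: algebra_simps)

lemma christoffel1_sym: "y \<in> U \<Longrightarrow> christoffel1 g d b e y = christoffel1 g d e b y"
  unfolding christoffel1_def using pd_metric_sym[of y d b e] by (simp add: algebra_simps)

lemma christoffel_metric: "(\<Sum>e\<in>UNIV. christoffel g x e f b * g x $ e $ d) = christoffel1 g d f b x"
proof -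
  have "(\<Sum>e\<in>UNIV. christoffel g x e f b * g x $ e $ d) = (\<Sum>e\<in>UNIV. g x $ d $ e * christoffel g x e f b)"
    by (rule sum.cong) (simp_all add: metric_sym[OF x_in_U, of _ d] mult.commute)
  then show ?thesis using metric_christoffel[OF x_in_U] by simp
qed

lemma riem_eq_christoffel1: "riem g x a b c d = pd b (christoffel1 g d a c) x - pd a (christoffel1 g d b c) x
   - (\<Sum>e\<in>UNIV. christoffel1 g e b d x * christoffel g x e a c) + (\<Sum>e\<in>UNIV. christoffel1 g e a d x * christoffel g x e b c)"
  unfolding riem_def riem_mixed_def
  by (rule riemann_lower_christoffel[where gx="\<lambda>a b. g x $ a $ b" and G = "christoffel g x"
       and dG="\<lambda>t e a b. pd t (\<lambda>y. christoffel g y e a b) x" and dGf = "\<lambda>b d a c. pd b (christoffel1 g d a c) x"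
       and dg = "\<lambda>b d e. pd b (\<lambda>y. g y $ d $ e) x" and Gf = "\<lambda>d a c. christoffel1 g d a c x",
       OF metric_pd_christoffel christoffel_metric pd_metric_eq_christoffel1 christoffel1_sym[OF x_in_U] metric_sym[OF x_in_U]])

lemma pd_christoffel1_sum: "pd b (christoffel1 g d a c) x + pd b (christoffel1 g c a d) x = pd b (pd a (\<lambda>y. g y $ d $ c)) x"
proof -
  have "pd b (christoffel1 g d a c) x + pd b (christoffel1 g c a d) x = pd b (\<lambda>y. christoffel1 g d a c y + christoffel1 g c a d y) x"
    using pd_add[OF differentiable_christoffel1 differentiable_christoffel1] by simp
  also have "\<dots> = pd b (pd a (\<lambda>y. g y $ d $ c)) x"
  proof (rule pd_cong_open[OF open_U x_in_U])
    fix y assume y: "y \<in> U"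
    show "christoffel1 g d a c y + christoffel1 g c a d y = pd a (\<lambda>y. g y $ d $ c) y"
      unfolding christoffel1_def using pd_metric_sym[OF y, of a c d] pd_metric_sym[OF y, of c a d] pd_metric_sym[OF y, of d c a]
      by (simp add: algebra_simps)
  qed
  finally show ?thesis .
qed

lemma riem_anti34: "riem g x a b c d = - riem g x a b d c"
proof -
  have second_partials_commute: "pd b (pd a (\<lambda>y. g y $ d $ c)) x = pd a (pd b (\<lambda>y. g y $ d $ c)) x"
    by (rule pd_commute[OF open_U x_in_U differentiable_metric differentiable_pd_metric[OF x_in_U] differentiable_pd_metric[OF x_in_U]])
  have ginv_symmetric: "\<And>a b. ginv g x a b = ginv g x b a" by (rule ginv_sym[OF x_in_U])
  have christoffel_contraction_swap: "(\<Sum>e\<in>UNIV. christoffel1 g e b d x * christoffel g x e a c)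
      = (\<Sum>e\<in>UNIV. christoffel1 g e a c x * christoffel g x e b d)" for a b c d
    unfolding christoffel_eq_christoffel1 by (rule sum_sym_bilinear_swap[OF ginv_symmetric])
  show ?thesis
    using pd_christoffel1_sum[of b d a c] pd_christoffel1_sum[of a d b c] second_partials_commute
      christoffel_contraction_swap[of b d a c] christoffel_contraction_swap[of a d b c]
    unfolding riem_eq_christoffel1 by linarith
qed

lemma ricci_identity_xi:
  "nabla2_xi t p q - nabla2_xi p t q = (\<Sum>b\<in>UNIV. riem g x t p q b * V x $ b)"
proof -
  have "nabla2_xi t p q - nabla2_xi p t q
      = (\<Sum>d\<in>UNIV. \<Sum>b\<in>UNIV. riem_mixed g x t p q d * (g x $ d $ b * V x $ b))"
    unfolding ricci_identity lower_def by (simp add: sum_distrib_left)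
  also have "\<dots> = (\<Sum>b\<in>UNIV. \<Sum>d\<in>UNIV. riem_mixed g x t p q d * g x $ d $ b * V x $ b)"
    by (subst sum.swap) (simp add: mult.assoc)
  also have "\<dots> = (\<Sum>b\<in>UNIV. riem g x t p q b * V x $ b)"
    unfolding riem_def by (simp add: sum_distrib_right)
  finally show ?thesis .
qed

text \<open>Cycling the Ricci identity through the three index positions and using the antisymmetry of
  \<nabla>\<nabla>\<xi> in its last pair, the cyclic identity makes the curvature terms collapse to one.\<close>

lemma killing_cov_cov: "nabla2_xi t p q = - (\<Sum>b\<in>UNIV. riem g x p q t b * V x $ b)"
proof -
  define S where "S t p q = (\<Sum>b\<in>UNIV. riem g x t p q b * V x $ b)" for t p q
  have cyclic: "S t p q + S p q t + S q t p = 0"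
  proof -
    have "S t p q + S p q t + S q t p = (\<Sum>b\<in>UNIV. (riem g x t p q b + riem g x p q t b + riem g x q t p b) * V x $ b)"
      unfolding S_def by (simp add: sum.distrib distrib_right)
    also have "\<dots> = 0" by (simp add: riem_cyclic)
    finally show ?thesis .
  qed
  have ricci: "nabla2_xi a b c - nabla2_xi b a c = S a b c" for a b c
    unfolding S_def by (rule ricci_identity_xi)
  have anti: "nabla2_xi a b c = - nabla2_xi a c b" for a b c
    using cov_cov_xi_anti[of a b c] by linarith
  show ?thesis
    using ricci[of t p q] ricci[of p q t] ricci[of q t p] anti[of t p q] anti[of p t q] anti[of q p t] cyclic
    unfolding S_def by linarith
qed

lemma cov_xi_dxi: "cov g (xi_dxi g V) x [t, a, b, c] =
   (1/6) * (nabla_xi x t a * nabla_xi x b c + nabla_xi x t b * nabla_xi x c a + nabla_xi x t c * nabla_xi x a b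
      - nabla_xi x t b * nabla_xi x a c - nabla_xi x t a * nabla_xi x c b - nabla_xi x t c * nabla_xi x b a
      + lower g V x a * nabla2_xi t b c + lower g V x b * nabla2_xi t c a + lower g V x c * nabla2_xi t a b
      - lower g V x b * nabla2_xi t a c - lower g V x a * nabla2_xi t c b - lower g V x c * nabla2_xi t b a)"
proof -
  let ?w = "\<lambda>a y. lower g V y a" and ?D = "\<lambda>b c y. nabla_xi y b c"
  have differentiable_product: "(\<lambda>y. ?w a y * ?D b c y) differentiable (at x)" for a b c
    by (intro differentiable_mult differentiable_xi[OF x_in_U] differentiable_cov_xi)
  have pd_product: "pd t (\<lambda>y. ?w a y * ?D b c y) x = pd t (?w a) x * nabla_xi x b c + lower g V x a * pd t (?D b c) x" for a b c
    by (rule pd_mult[OF differentiable_xi[OF x_in_U] differentiable_cov_xi])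
  have xi_dxi_eq: "(\<lambda>y. xi_dxi g V y [a, b, c]) = (\<lambda>y. (1/6) * (?w a y * ?D b c y + ?w b y * ?D c a y + ?w c y * ?D a b y
      - ?w b y * ?D a c y - ?w a y * ?D c b y - ?w c y * ?D b a y))"
    by (simp add: xi_dxi_def Let_def)
  have pd_xi_dxi: "pd t (\<lambda>y. xi_dxi g V y [a, b, c]) x = (1/6) * ((pd t (?w a) x * nabla_xi x b c + lower g V x a * pd t (?D b c) x)
     + (pd t (?w b) x * nabla_xi x c a + lower g V x b * pd t (?D c a) x)
     + (pd t (?w c) x * nabla_xi x a b + lower g V x c * pd t (?D a b) x)
     - (pd t (?w b) x * nabla_xi x a c + lower g V x b * pd t (?D a c) x)
     - (pd t (?w a) x * nabla_xi x c b + lower g V x a * pd t (?D c b) x)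
     - (pd t (?w c) x * nabla_xi x b a + lower g V x c * pd t (?D b a) x))"
    unfolding xi_dxi_eq
    by (simp only: pd_cmult pd_add pd_diff differentiable_product differentiable_add differentiable_diff pd_product)
  have cov_expand: "cov g (xi_dxi g V) x [t, a, b, c] = pd t (\<lambda>y. xi_dxi g V y [a, b, c]) x
     - ((\<Sum>e\<in>UNIV. christoffel g x e t a * xi_dxi g V x [e, b, c])
        + (\<Sum>e\<in>UNIV. christoffel g x e t b * xi_dxi g V x [a, e, c])
        + (\<Sum>e\<in>UNIV. christoffel g x e t c * xi_dxi g V x [a, b, e]))"
    by (simp add: cov_def[of g "xi_dxi g V"] eval_nat_numeral lessThan_Suc)
  have pd_xi_eq: "pd t (?w a) x = nabla_xi x t a + (\<Sum>e\<in>UNIV. christoffel g x e t a * lower g V x e)" for t a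
    using cov_xi[of x t a] by simp
  have pd_nabla_xi_eq: "pd t (?D b c) x = nabla2_xi t b c
      + (\<Sum>e\<in>UNIV. christoffel g x e t b * nabla_xi x e c) + (\<Sum>e\<in>UNIV. christoffel g x e t c * nabla_xi x b e)" for t b c
    using cov_cov_xi[of t b c] by simp
  have xi_dxi_at_x: "xi_dxi g V x [a, b, c] = (1/6) * (lower g V x a * nabla_xi x b c + lower g V x b * nabla_xi x c a + lower g V x c * nabla_xi x a b
      - lower g V x b * nabla_xi x a c - lower g V x a * nabla_xi x c b - lower g V x c * nabla_xi x b a)" for a b c
    by (simp add: xi_dxi_def Let_def)
  show ?thesis
    unfolding cov_expand pd_xi_dxi xi_dxi_at_x
    by (rule cov_xi_dxi_algebraic[where dW = "\<lambda>t a. pd t (?w a) x" and pdD = "\<lambda>t b c. pd t (?D b c) x", OF pd_xi_eq pd_nabla_xi_eq])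
qed

end

section \<open>The algebraic identity\<close>

lemma sum_swap_2: "(\<Sum>i\<in>A. \<Sum>a\<in>B1. \<Sum>b\<in>B2. f i a b) = (\<Sum>a\<in>B1. \<Sum>b\<in>B2. \<Sum>i\<in>A. f i a b)"
  by (subst sum.swap) (rule sum.cong[OF refl], rule sum.swap)

lemma sum_swap_3:
  "(\<Sum>i\<in>A. \<Sum>a\<in>B1. \<Sum>b\<in>B2. \<Sum>c\<in>B3. f i a b c) = (\<Sum>a\<in>B1. \<Sum>b\<in>B2. \<Sum>c\<in>B3. \<Sum>i\<in>A. f i a b c)"
  by (subst sum.swap) (rule sum.cong[OF refl], rule sum_swap_2)

lemma sum_swap_4:
  "(\<Sum>i\<in>A. \<Sum>a\<in>B1. \<Sum>b\<in>B2. \<Sum>c\<in>B3. \<Sum>d\<in>B4. f i a b c d)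
   = (\<Sum>a\<in>B1. \<Sum>b\<in>B2. \<Sum>c\<in>B3. \<Sum>d\<in>B4. \<Sum>i\<in>A. f i a b c d)"
  by (subst sum.swap) (rule sum.cong[OF refl], rule sum_swap_3)

lemma sum_swap_5:
  "(\<Sum>i\<in>A. \<Sum>a\<in>B1. \<Sum>b\<in>B2. \<Sum>c\<in>B3. \<Sum>d\<in>B4. \<Sum>e\<in>B5. f i a b c d e)
   = (\<Sum>a\<in>B1. \<Sum>b\<in>B2. \<Sum>c\<in>B3. \<Sum>d\<in>B4. \<Sum>e\<in>B5. \<Sum>i\<in>A. f i a b c d e)"
  by (subst sum.swap) (rule sum.cong[OF refl], rule sum_swap_4)

lemma sum_swap_6:
  "(\<Sum>i\<in>A. \<Sum>a\<in>B1. \<Sum>b\<in>B2. \<Sum>c\<in>B3. \<Sum>d\<in>B4. \<Sum>e\<in>B5. \<Sum>k\<in>B6. f i a b c d e k)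
   = (\<Sum>a\<in>B1. \<Sum>b\<in>B2. \<Sum>c\<in>B3. \<Sum>d\<in>B4. \<Sum>e\<in>B5. \<Sum>k\<in>B6. \<Sum>i\<in>A. f i a b c d e k)"
  by (subst sum.swap) (rule sum.cong[OF refl], rule sum_swap_5)

text \<open>The data of the theorem at one point: metric \<open>g\<close> with inverse \<open>h\<close>, Riemann tensor \<open>R\<close>,
  the Killing vector \<open>V\<close> and its 1-form \<open>w\<close>, \<open>F = \<nabla>w\<close> and \<open>K = \<nabla>\<nabla>w\<close>.\<close>

locale killing_algebra =
  fixes g h :: "'n::finite \<Rightarrow> 'n \<Rightarrow> real" and R :: "'n \<Rightarrow> 'n \<Rightarrow> 'n \<Rightarrow> 'n \<Rightarrow> real"
    and V w :: "'n \<Rightarrow> real" and F :: "'n \<Rightarrow> 'n \<Rightarrow> real" and K :: "'n \<Rightarrow> 'n \<Rightarrow> 'n \<Rightarrow> real"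
  assumes g_sym: "g a b = g b a" and h_sym: "h a b = h b a"
    and g_h_inverse: "(\<Sum>b\<in>UNIV. g a b * h b c) = (if a = c then 1 else 0)"
    and w_lower: "w a = (\<Sum>b\<in>UNIV. g a b * V b)"
    and R_anti12: "R a b c d = - R b a c d" and R_anti34: "R a b c d = - R a b d c"
    and R_cyclic: "R a b c d + R b c a d + R c a b d = 0"
    and F_anti: "F a b = - F b a"
    and K_riem: "K t p q = - (\<Sum>e\<in>UNIV. R p q t e * V e)"
begin

lemma R_pair_sym: "R a b c d = R c d a b"
  using R_cyclic[of a b c d] R_cyclic[of b c d a] R_cyclic[of c d a b] R_cyclic[of d a b c]
    R_anti12[of a b c d] R_anti12[of b c d a] R_anti12[of c d a b] R_anti12[of d a b c]
    R_anti12[of b c a d] R_anti12[of c a b d] R_anti12[of c d b a] R_anti12[of d b c a] R_anti12[of d a c b] R_anti12[of a c d b]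
    R_anti12[of a b d c] R_anti12[of b d a c]
    R_anti34[of a b c d] R_anti34[of b c a d] R_anti34[of c a b d] R_anti34[of b c d a] R_anti34[of c d b a] R_anti34[of d b c a]
    R_anti34[of c d a b] R_anti34[of d a c b] R_anti34[of a c d b] R_anti34[of d a b c] R_anti34[of a b d c] R_anti34[of b d a c]
    R_anti34[of b a d c] R_anti34[of d c b a]
  by linarith

lemma w_raise: "(\<Sum>a\<in>UNIV. w a * h a b) = V b"
proof -
  have "(\<Sum>a\<in>UNIV. w a * h a b) = (\<Sum>a\<in>UNIV. \<Sum>c\<in>UNIV. g a c * V c * h a b)"
    by (simp add: w_lower sum_distrib_right)
  also have "\<dots> = (\<Sum>c\<in>UNIV. V c * (\<Sum>a\<in>UNIV. g c a * h a b))"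
    by (subst sum.swap) (simp add: sum_distrib_left g_sym mult_ac)
  also have "\<dots> = (\<Sum>c\<in>UNIV. if c = b then V c else 0)"
    by (rule sum.cong) (auto simp: g_h_inverse)
  finally show ?thesis by simp
qed

lemma w_raise_sum: "(\<Sum>a\<in>UNIV. w a * (\<Sum>b\<in>UNIV. h a b * f b)) = (\<Sum>b\<in>UNIV. V b * f b)"
proof -
  have "(\<Sum>a\<in>UNIV. w a * (\<Sum>b\<in>UNIV. h a b * f b)) = (\<Sum>a\<in>UNIV. \<Sum>b\<in>UNIV. w a * h a b * f b)"
    by (simp add: sum_distrib_left mult.assoc)
  also have "\<dots> = (\<Sum>b\<in>UNIV. (\<Sum>a\<in>UNIV. w a * h a b) * f b)"
    by (subst sum.swap) (simp add: sum_distrib_right)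
  finally show ?thesis by (simp add: w_raise)
qed

definition "Rxi t b c = (\<Sum>e\<in>UNIV. V e * R e t b c)"

lemma K_eq_Rxi: "K t b c = Rxi t b c"
  unfolding K_riem Rxi_def
  by (simp add: sum_negf[symmetric] R_pair_sym[of b c t] R_anti12[of t] mult.commute)

lemma K_anti: "K t b c = - K t c b"
  unfolding K_eq_Rxi Rxi_def by (simp add: R_anti34[of _ t b c] sum_negf)

lemma Rxi_anti: "Rxi t b c = - Rxi t c b"
  unfolding Rxi_def by (simp add: R_anti34[of _ t b c] sum_negf)

definition "Rxixi b d = (\<Sum>a\<in>UNIV. \<Sum>c\<in>UNIV. V a * V c * R a b c d)"
definition "Rxixi_up s t = (\<Sum>b\<in>UNIV. \<Sum>d\<in>UNIV. h s b * h t d * Rxixi b d)"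

lemma Rxixi_sym: "Rxixi b d = Rxixi d b"
proof -
  have "Rxixi d b = (\<Sum>a\<in>UNIV. \<Sum>c\<in>UNIV. V a * V c * R c b a d)" unfolding Rxixi_def by (simp add: R_pair_sym[of _ d])
  also have "\<dots> = (\<Sum>c\<in>UNIV. \<Sum>a\<in>UNIV. V a * V c * R c b a d)" by (rule sum.swap)
  also have "\<dots> = Rxixi b d" unfolding Rxixi_def by (simp add: mult.commute)
  finally show ?thesis by simp
qed

lemma Rxixi_up_sym: "Rxixi_up s t = Rxixi_up t s"
proof -
  have "Rxixi_up t s = (\<Sum>b\<in>UNIV. \<Sum>d\<in>UNIV. h t b * h s d * Rxixi d b)" unfolding Rxixi_up_def
    by (intro sum.cong refl) (metis Rxixi_sym)
  also have "\<dots> = (\<Sum>d\<in>UNIV. \<Sum>b\<in>UNIV. h t b * h s d * Rxixi d b)" by (rule sum.swap)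
  also have "\<dots> = Rxixi_up s t" unfolding Rxixi_up_def by (simp add: mult.commute)
  finally show ?thesis by simp
qed

lemma V_Rxixi: "(\<Sum>b\<in>UNIV. V b * Rxixi b d) = 0"
proof -
  define S where "S = (\<Sum>a\<in>UNIV. \<Sum>b\<in>UNIV. \<Sum>c\<in>UNIV. V a * V b * V c * R a b c d)"
  have "(\<Sum>b\<in>UNIV. V b * Rxixi b d) = (\<Sum>b\<in>UNIV. \<Sum>a\<in>UNIV. \<Sum>c\<in>UNIV. V a * V b * V c * R a b c d)"
    unfolding Rxixi_def by (simp add: sum_distrib_left mult_ac)
  also have "\<dots> = S" unfolding S_def by (rule sum.swap)
  finally have 1: "(\<Sum>b\<in>UNIV. V b * Rxixi b d) = S" .
  have "S = (\<Sum>a\<in>UNIV. \<Sum>b\<in>UNIV. \<Sum>c\<in>UNIV. V b * V a * V c * R b a c d)" unfolding S_def by (rule sum.swap)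
  also have "\<dots> = - S" unfolding S_def sum_negf[symmetric]
    by (intro sum.cong refl) (subst R_anti12, simp add: mult_ac)
  finally have "S = 0" by simp
  with 1 show ?thesis by simp
qed

lemma Rxixi_up_w: "(\<Sum>s\<in>UNIV. Rxixi_up s t * w s) = 0"
proof -
  have "(\<Sum>s\<in>UNIV. Rxixi_up s t * w s) = (\<Sum>s\<in>UNIV. \<Sum>b\<in>UNIV. \<Sum>d\<in>UNIV. w s * h s b * (h t d * Rxixi b d))"
    unfolding Rxixi_up_def by (simp add: sum_distrib_right sum_distrib_left mult_ac)
  also have "\<dots> = (\<Sum>b\<in>UNIV. \<Sum>d\<in>UNIV. (\<Sum>s\<in>UNIV. w s * h s b) * (h t d * Rxixi b d))"
    by (subst sum_swap_2) (simp add: sum_distrib_right)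
  also have "\<dots> = (\<Sum>d\<in>UNIV. \<Sum>b\<in>UNIV. h t d * (V b * Rxixi b d))"
    by (subst sum.swap) (simp add: w_raise mult_ac)
  also have "\<dots> = 0" by (simp add: sum_distrib_left[symmetric] V_Rxixi)
  finally show ?thesis .
qed

definition "R_up a b c d = (\<Sum>a'\<in>UNIV. \<Sum>b'\<in>UNIV. \<Sum>c'\<in>UNIV. \<Sum>d'\<in>UNIV. h a a' * h b b' * h c c' * h d d' * R a' b' c' d')"
definition "R_uuud a b c d = (\<Sum>a'\<in>UNIV. \<Sum>b'\<in>UNIV. \<Sum>c'\<in>UNIV. h a a' * h b b' * h c c' * R a' b' c' d)"

text \<open>\<open>DW t a b c\<close> is \<open>\<nabla>_t (\<xi>_[a \<nabla>_b \<xi>_c])\<close>, see \<open>cov_xi_dxi\<close> below.\<close>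

definition "DW t a b c = (1/6) * (F t a * F b c + F t b * F c a + F t c * F a b - F t b * F a c - F t a * F c b - F t c * F b a
      + w a * K t b c + w b * K t c a + w c * K t a b - w b * K t a c - w a * K t c b - w c * K t b a)"
definition "RR1 al be la mu = (\<Sum>r\<in>UNIV. \<Sum>s\<in>UNIV. \<Sum>r'\<in>UNIV. \<Sum>s'\<in>UNIV.
        R al r la s * h r r' * h s s' * R be r' mu s')"
definition "RR2 al be la mu = (\<Sum>r\<in>UNIV. \<Sum>s\<in>UNIV. \<Sum>r'\<in>UNIV. \<Sum>s'\<in>UNIV.
        R al r mu s * h r r' * h s s' * R be r' la s')"
definition "RR34 la mu = (\<Sum>r\<in>UNIV. \<Sum>t\<in>UNIV. \<Sum>s\<in>UNIV. \<Sum>r'\<in>UNIV. \<Sum>t'\<in>UNIV. \<Sum>s'\<in>UNIV.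
        R r t la s * h r r' * h t t' * h s s' * R r' t' mu s')"
definition "RR12 al be = (\<Sum>r\<in>UNIV. \<Sum>s\<in>UNIV. \<Sum>t\<in>UNIV. \<Sum>r'\<in>UNIV. \<Sum>s'\<in>UNIV. \<Sum>t'\<in>UNIV.
        R al r s t * h r r' * h s s' * h t t' * R be r' s' t')"
definition "kretschmann = (\<Sum>r\<in>UNIV. \<Sum>t\<in>UNIV. \<Sum>s\<in>UNIV. \<Sum>n\<in>UNIV. \<Sum>r'\<in>UNIV. \<Sum>t'\<in>UNIV. \<Sum>s'\<in>UNIV. \<Sum>n'\<in>UNIV.
        R r t s n * h r r' * h t t' * h s s' * h n n' * R r' t' s' n')"
definition "Bel al be la mu = RR1 al be la mu + RR2 al be la mu - (1/2) * g al be * RR34 la mu - (1/2) * g la mu * RR12 al be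
   + (1/8) * g al be * g la mu * kretschmann"

lemma DW_eq: "DW t a b c = (1/3) * (F t a * F b c + F t b * F c a + F t c * F a b + w a * K t b c + w b * K t c a + w c * K t a b)"
  unfolding DW_def using F_anti[of a c] F_anti[of c b] F_anti[of b a] K_anti[of t a c] K_anti[of t c b] K_anti[of t b a]
  by (simp add: algebra_simps)

definition "Bel_xi3 m = (\<Sum>al\<in>UNIV. \<Sum>be\<in>UNIV. \<Sum>la\<in>UNIV. V al * V be * V la * Bel al be la m)"
definition "RR1_xi3 m = (\<Sum>al\<in>UNIV. \<Sum>be\<in>UNIV. \<Sum>la\<in>UNIV. V al * V be * V la * RR1 al be la m)"
definition "RR2_xi3 m = (\<Sum>al\<in>UNIV. \<Sum>be\<in>UNIV. \<Sum>la\<in>UNIV. V al * V be * V la * RR2 al be la m)"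
definition "xi_norm2 = (\<Sum>a\<in>UNIV. V a * w a)"
definition "RR34_xi m = (\<Sum>la\<in>UNIV. V la * RR34 la m)"

text \<open>The part of \<open>Bel_xi3 m\<close> proportional to \<open>w m\<close>; it cancels in the antisymmetrization.\<close>

definition "Bel_xi3_w_coeff = - (1/2) * (\<Sum>al\<in>UNIV. \<Sum>be\<in>UNIV. V al * V be * RR12 al be) + (1/8) * xi_norm2 * kretschmann"
definition "rhs2 m = (\<Sum>be\<in>UNIV. \<Sum>rh\<in>UNIV. \<Sum>ta\<in>UNIV. \<Sum>si\<in>UNIV. V be * R_uuud rh ta si m * DW si rh ta be)"

lemma lhs_eq_Bel_xi3: "(\<Sum>al\<in>UNIV. \<Sum>be\<in>UNIV. \<Sum>la\<in>UNIV. V al * V be * V la *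
            (1/2) * (Bel al be la mu * w ga - Bel al be la ga * w mu)) = (1/2) * (Bel_xi3 mu * w ga - Bel_xi3 ga * w mu)"
  unfolding Bel_xi3_def by (simp add: sum_distrib_left sum_distrib_right sum_subtractf algebra_simps)

lemma rhs_second_eq_rhs2: "(\<Sum>be\<in>UNIV. \<Sum>rh\<in>UNIV. \<Sum>ta\<in>UNIV. \<Sum>si\<in>UNIV.
              V be * (1/2) * (R_uuud rh ta si mu * w ga - R_uuud rh ta si ga * w mu) * DW si rh ta be)
   = (1/2) * (rhs2 mu * w ga - rhs2 ga * w mu)"
  unfolding rhs2_def by (simp add: sum_distrib_left sum_distrib_right sum_subtractf algebra_simps)

lemma V_V_g: "(\<Sum>al\<in>UNIV. \<Sum>be\<in>UNIV. V al * V be * g al be) = xi_norm2"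
  unfolding xi_norm2_def w_lower by (simp add: sum_distrib_left mult_ac)

lemma V_g: "(\<Sum>la\<in>UNIV. V la * g la m) = w m"
  unfolding w_lower by (simp add: g_sym mult.commute)

lemma Bel_xi3_decomp: "Bel_xi3 m = RR1_xi3 m + RR2_xi3 m - (1/2) * xi_norm2 * RR34_xi m + Bel_xi3_w_coeff * w m"
proof -
  have 1: "(\<Sum>al\<in>UNIV. \<Sum>be\<in>UNIV. \<Sum>la\<in>UNIV. V al * V be * V la * (g al be * RR34 la m)) = xi_norm2 * RR34_xi m"
    unfolding V_V_g[symmetric] RR34_xi_def by (simp add: sum_distrib_left sum_distrib_right mult_ac)
  have 2: "(\<Sum>al\<in>UNIV. \<Sum>be\<in>UNIV. \<Sum>la\<in>UNIV. V al * V be * V la * (g la m * RR12 al be))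
      = (\<Sum>al\<in>UNIV. \<Sum>be\<in>UNIV. V al * V be * RR12 al be) * w m"
    unfolding V_g[symmetric] by (simp add: sum_distrib_left sum_distrib_right mult_ac)
  have 3: "(\<Sum>al\<in>UNIV. \<Sum>be\<in>UNIV. \<Sum>la\<in>UNIV. V al * V be * V la * (g al be * g la m * kretschmann)) = xi_norm2 * w m * kretschmann"
    unfolding V_V_g[symmetric] V_g[symmetric] by (simp add: sum_distrib_left sum_distrib_right mult_ac)
  have "Bel_xi3 m = RR1_xi3 m + RR2_xi3 m - (1/2) * (\<Sum>al\<in>UNIV. \<Sum>be\<in>UNIV. \<Sum>la\<in>UNIV. V al * V be * V la * (g al be * RR34 la m))
     - (1/2) * (\<Sum>al\<in>UNIV. \<Sum>be\<in>UNIV. \<Sum>la\<in>UNIV. V al * V be * V la * (g la m * RR12 al be))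
     + (1/8) * (\<Sum>al\<in>UNIV. \<Sum>be\<in>UNIV. \<Sum>la\<in>UNIV. V al * V be * V la * (g al be * g la m * kretschmann))"
    unfolding Bel_xi3_def RR1_xi3_def RR2_xi3_def Bel_def
    by (simp add: sum.distrib sum_subtractf sum_distrib_left algebra_simps)
  also have "\<dots> = RR1_xi3 m + RR2_xi3 m - (1/2) * xi_norm2 * RR34_xi m + Bel_xi3_w_coeff * w m"
    unfolding 1 2 3 Bel_xi3_w_coeff_def by (simp add: algebra_simps)
  finally show ?thesis .
qed

lemma w_w_R_up: "(\<Sum>la\<in>UNIV. \<Sum>be\<in>UNIV. w la * w be * R_up la si be ta) = Rxixi_up si ta"
proof -
  have "(\<Sum>la\<in>UNIV. \<Sum>be\<in>UNIV. w la * w be * R_up la si be ta)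
     = (\<Sum>la\<in>UNIV. \<Sum>be\<in>UNIV. \<Sum>a'\<in>UNIV. \<Sum>b'\<in>UNIV. \<Sum>c'\<in>UNIV. \<Sum>d'\<in>UNIV.
          w la * w be * (h la a' * h si b' * h be c' * h ta d' * R a' b' c' d'))"
    unfolding R_up_def by (simp add: sum_distrib_left)
  also have "\<dots> = (\<Sum>la\<in>UNIV. \<Sum>a'\<in>UNIV. \<Sum>b'\<in>UNIV. \<Sum>c'\<in>UNIV. \<Sum>d'\<in>UNIV. \<Sum>be\<in>UNIV.
          w la * w be * (h la a' * h si b' * h be c' * h ta d' * R a' b' c' d'))"
    by (rule sum.cong[OF refl], rule sum_swap_4)
  also have "\<dots> = (\<Sum>a'\<in>UNIV. \<Sum>b'\<in>UNIV. \<Sum>c'\<in>UNIV. \<Sum>d'\<in>UNIV. \<Sum>la\<in>UNIV. \<Sum>be\<in>UNIV.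
          w la * w be * (h la a' * h si b' * h be c' * h ta d' * R a' b' c' d'))"
    by (rule sum_swap_4)
  also have "\<dots> = (\<Sum>a'\<in>UNIV. \<Sum>b'\<in>UNIV. \<Sum>c'\<in>UNIV. \<Sum>d'\<in>UNIV. \<Sum>la\<in>UNIV. \<Sum>be\<in>UNIV.
          (w la * h la a') * (w be * h be c') * (h si b' * h ta d' * R a' b' c' d'))"
    by (simp add: mult_ac)
  also have "\<dots> = (\<Sum>a'\<in>UNIV. \<Sum>b'\<in>UNIV. \<Sum>c'\<in>UNIV. \<Sum>d'\<in>UNIV.
          (\<Sum>la\<in>UNIV. w la * h la a') * (\<Sum>be\<in>UNIV. w be * h be c') * (h si b' * h ta d' * R a' b' c' d'))"
    unfolding sum_product by (simp only: sum_distrib_right)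
  also have "\<dots> = (\<Sum>a'\<in>UNIV. \<Sum>b'\<in>UNIV. \<Sum>c'\<in>UNIV. \<Sum>d'\<in>UNIV. V a' * V c' * (h si b' * h ta d' * R a' b' c' d'))"
    by (simp add: w_raise)
  also have "\<dots> = (\<Sum>b'\<in>UNIV. \<Sum>a'\<in>UNIV. \<Sum>c'\<in>UNIV. \<Sum>d'\<in>UNIV. V a' * V c' * (h si b' * h ta d' * R a' b' c' d'))"
    by (rule sum.swap)
  also have "\<dots> = (\<Sum>b'\<in>UNIV. \<Sum>d'\<in>UNIV. \<Sum>a'\<in>UNIV. \<Sum>c'\<in>UNIV. V a' * V c' * (h si b' * h ta d' * R a' b' c' d'))"
    by (rule sum.cong[OF refl], rule sum_swap_2[symmetric])
  also have "\<dots> = Rxixi_up si ta"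
    unfolding Rxixi_up_def Rxixi_def by (simp add: sum_distrib_left mult_ac)
  finally show ?thesis .
qed

definition "rhs1 mu ga = (\<Sum>la\<in>UNIV. \<Sum>si\<in>UNIV. \<Sum>be\<in>UNIV. \<Sum>ta\<in>UNIV.
              w la * w be * R_up la si be ta * DW ta mu si ga)"

lemma rhs1_eq_Rxixi_up: "rhs1 mu ga = (\<Sum>si\<in>UNIV. \<Sum>ta\<in>UNIV. Rxixi_up si ta * DW ta mu si ga)"
proof -
  have "rhs1 mu ga = (\<Sum>si\<in>UNIV. \<Sum>la\<in>UNIV. \<Sum>be\<in>UNIV. \<Sum>ta\<in>UNIV. w la * w be * R_up la si be ta * DW ta mu si ga)"
    unfolding rhs1_def by (rule sum.swap)
  also have "\<dots> = (\<Sum>si\<in>UNIV. \<Sum>ta\<in>UNIV. \<Sum>la\<in>UNIV. \<Sum>be\<in>UNIV. w la * w be * R_up la si be ta * DW ta mu si ga)"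
    by (rule sum.cong[OF refl], rule sum_swap_2[symmetric])
  also have "\<dots> = (\<Sum>si\<in>UNIV. \<Sum>ta\<in>UNIV. (\<Sum>la\<in>UNIV. \<Sum>be\<in>UNIV. w la * w be * R_up la si be ta) * DW ta mu si ga)"
    by (simp add: sum_distrib_right)
  finally show ?thesis by (simp add: w_w_R_up)
qed

definition "Rxixi_K c = (\<Sum>si\<in>UNIV. \<Sum>ta\<in>UNIV. Rxixi_up si ta * K ta si c)"

lemma rhs1_eq: "rhs1 mu ga = (1/3) * (w mu * Rxixi_K ga - w ga * Rxixi_K mu)"
proof -
  let ?S = "\<lambda>f. (\<Sum>si\<in>UNIV. \<Sum>ta\<in>UNIV. Rxixi_up si ta * f si ta)"
  have e: "rhs1 mu ga = (1/3) * (?S (\<lambda>si ta. F ta mu * F si ga) + ?S (\<lambda>si ta. F ta si * F ga mu)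
     + ?S (\<lambda>si ta. F ta ga * F mu si) + w mu * ?S (\<lambda>si ta. K ta si ga) + ?S (\<lambda>si ta. w si * K ta ga mu)
     + w ga * ?S (\<lambda>si ta. K ta mu si))"
    unfolding rhs1_eq_Rxixi_up DW_eq by (simp add: sum.distrib sum_distrib_left algebra_simps)
  have p3: "?S (\<lambda>si ta. F ta ga * F mu si) = - ?S (\<lambda>si ta. F ta mu * F si ga)"
  proof -
    have "?S (\<lambda>si ta. F ta ga * F mu si) = (\<Sum>si\<in>UNIV. \<Sum>ta\<in>UNIV. Rxixi_up ta si * (F si ga * F mu ta))"
      by (rule sum.swap)
    also have "\<dots> = (\<Sum>si\<in>UNIV. \<Sum>ta\<in>UNIV. - (Rxixi_up si ta * (F ta mu * F si ga)))"
      apply (intro sum.cong refl)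
      subgoal for si ta using Rxixi_up_sym[of ta si] F_anti[of mu ta] by simp
      done
    finally show ?thesis by (simp add: sum_negf)
  qed
  have p2: "?S (\<lambda>si ta. F ta si * F ga mu) = 0"
  proof -
    have "?S (\<lambda>si ta. F ta si * F ga mu) = (\<Sum>si\<in>UNIV. \<Sum>ta\<in>UNIV. Rxixi_up ta si * (F si ta * F ga mu))"
      by (rule sum.swap)
    also have "\<dots> = - ?S (\<lambda>si ta. F ta si * F ga mu)"
      unfolding sum_negf[symmetric]
      apply (intro sum.cong refl)
      subgoal for si ta using Rxixi_up_sym[of ta si] F_anti[of si ta] by simp
      done
    finally show ?thesis by simp
  qed
  have p5: "?S (\<lambda>si ta. w si * K ta ga mu) = 0"
  proof -
    have "?S (\<lambda>si ta. w si * K ta ga mu) = (\<Sum>ta\<in>UNIV. \<Sum>si\<in>UNIV. Rxixi_up si ta * (w si * K ta ga mu))"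
      by (rule sum.swap)
    also have "\<dots> = (\<Sum>ta\<in>UNIV. (\<Sum>si\<in>UNIV. Rxixi_up si ta * w si) * K ta ga mu)"
      by (simp add: sum_distrib_right sum_distrib_left mult_ac)
    finally show ?thesis by (simp add: Rxixi_up_w)
  qed
  have p6: "?S (\<lambda>si ta. K ta mu si) = - Rxixi_K mu"
    unfolding Rxixi_K_def sum_negf[symmetric] by (intro sum.cong refl) (simp add: K_anti[of _ mu])
  show ?thesis unfolding e p3 p2 p5 p6 by (simp add: Rxixi_K_def algebra_simps)
qed

lemma R_uuud_anti: "R_uuud a b c d = - R_uuud b a c d"
proof -
  have "R_uuud b a c d = (\<Sum>a'\<in>UNIV. \<Sum>b'\<in>UNIV. \<Sum>c'\<in>UNIV. h b b' * h a a' * h c c' * R b' a' c' d)"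
    unfolding R_uuud_def by (rule sum.swap)
  also have "\<dots> = - R_uuud a b c d"
    unfolding R_uuud_def sum_negf[symmetric]
    apply (intro sum.cong refl)
    subgoal for a' b' c' using R_anti12[of b' a' c' d] by (simp add: mult_ac)
    done
  finally show ?thesis by simp
qed

lemma R_uuud_cyclic: "R_uuud a b c d + R_uuud b c a d + R_uuud c a b d = 0"
proof -
  have 1: "R_uuud b c a d = (\<Sum>x\<in>UNIV. \<Sum>y\<in>UNIV. \<Sum>z\<in>UNIV. h a x * h b y * h c z * R y z x d)"
  proof -
    have "R_uuud b c a d = (\<Sum>y\<in>UNIV. \<Sum>z\<in>UNIV. \<Sum>x\<in>UNIV. h a x * h b y * h c z * R y z x d)"
      unfolding R_uuud_def by (simp add: mult_ac)
    also have "\<dots> = (\<Sum>x\<in>UNIV. \<Sum>y\<in>UNIV. \<Sum>z\<in>UNIV. h a x * h b y * h c z * R y z x d)"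
      by (rule sum_swap_2[symmetric])
    finally show ?thesis .
  qed
  have 2: "R_uuud c a b d = (\<Sum>x\<in>UNIV. \<Sum>y\<in>UNIV. \<Sum>z\<in>UNIV. h a x * h b y * h c z * R z x y d)"
  proof -
    have "R_uuud c a b d = (\<Sum>z\<in>UNIV. \<Sum>x\<in>UNIV. \<Sum>y\<in>UNIV. h a x * h b y * h c z * R z x y d)"
      unfolding R_uuud_def by (simp add: mult_ac)
    also have "\<dots> = (\<Sum>x\<in>UNIV. \<Sum>y\<in>UNIV. \<Sum>z\<in>UNIV. h a x * h b y * h c z * R z x y d)"
      by (rule sum_swap_2)
    finally show ?thesis .
  qed
  have "R_uuud a b c d + R_uuud b c a d + R_uuud c a b d =
     (\<Sum>x\<in>UNIV. \<Sum>y\<in>UNIV. \<Sum>z\<in>UNIV. h a x * h b y * h c z * (R x y z d + R y z x d + R z x y d))"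
    unfolding 1 2 by (simp add: R_uuud_def sum.distrib algebra_simps)
  also have "\<dots> = 0" by (simp add: R_cyclic)
  finally show ?thesis .
qed

definition "Fxi t = (\<Sum>b\<in>UNIV. F t b * V b)"
definition "Kxi s t = (\<Sum>b\<in>UNIV. K s t b * V b)"
definition "R_w_Kxi m = (\<Sum>rh\<in>UNIV. \<Sum>ta\<in>UNIV. \<Sum>si\<in>UNIV. R_uuud rh ta si m * (w rh * Kxi si ta))"
definition "R_K m = (\<Sum>rh\<in>UNIV. \<Sum>ta\<in>UNIV. \<Sum>si\<in>UNIV. R_uuud rh ta si m * K si rh ta)"
definition "R_F_Fxi m = (\<Sum>rh\<in>UNIV. \<Sum>ta\<in>UNIV. \<Sum>si\<in>UNIV. R_uuud rh ta si m * (F si rh * Fxi ta))"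

lemma V_R_uuud_DW: "(\<Sum>be\<in>UNIV. V be * R_uuud rh ta si m * DW si rh ta be) =
   (1/3) * (R_uuud rh ta si m * (F si rh * Fxi ta) - R_uuud rh ta si m * (F si ta * Fxi rh) + R_uuud rh ta si m * (Fxi si * F rh ta)
     + R_uuud rh ta si m * (w rh * Kxi si ta) - R_uuud rh ta si m * (w ta * Kxi si rh) + xi_norm2 * (R_uuud rh ta si m * K si rh ta))"
proof -
  let ?R = "R_uuud rh ta si m"
  have pw: "V be * ?R * DW si rh ta be =
      ((1/3) * ?R * F si rh) * (F ta be * V be) + ((1/3) * ?R * (- F si ta)) * (F rh be * V be)
    + ((1/3) * ?R * F rh ta) * (F si be * V be) + ((1/3) * ?R * w rh) * (K si ta be * V be)
    + ((1/3) * ?R * (- w ta)) * (K si rh be * V be) + ((1/3) * ?R * K si rh ta) * (V be * w be)" for be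
    unfolding DW_eq using F_anti[of be rh] K_anti[of si be rh] by (simp add: algebra_simps)
  have "(\<Sum>be\<in>UNIV. V be * ?R * DW si rh ta be) =
      ((1/3) * ?R * F si rh) * Fxi ta + ((1/3) * ?R * (- F si ta)) * Fxi rh
    + ((1/3) * ?R * F rh ta) * Fxi si + ((1/3) * ?R * w rh) * Kxi si ta
    + ((1/3) * ?R * (- w ta)) * Kxi si rh + ((1/3) * ?R * K si rh ta) * xi_norm2"
    unfolding pw Fxi_def Kxi_def xi_norm2_def by (simp only: sum.distrib sum_distrib_left[symmetric])
  then show ?thesis by (simp add: algebra_simps)
qed

lemma rhs2_decomp: "rhs2 m = (1/3) * (R_F_Fxi m
     - (\<Sum>rh\<in>UNIV. \<Sum>ta\<in>UNIV. \<Sum>si\<in>UNIV. R_uuud rh ta si m * (F si ta * Fxi rh))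
     + (\<Sum>rh\<in>UNIV. \<Sum>ta\<in>UNIV. \<Sum>si\<in>UNIV. R_uuud rh ta si m * (Fxi si * F rh ta))
     + R_w_Kxi m - (\<Sum>rh\<in>UNIV. \<Sum>ta\<in>UNIV. \<Sum>si\<in>UNIV. R_uuud rh ta si m * (w ta * Kxi si rh)) + xi_norm2 * R_K m)"
proof -
  have "rhs2 m = (\<Sum>rh\<in>UNIV. \<Sum>ta\<in>UNIV. \<Sum>si\<in>UNIV. \<Sum>be\<in>UNIV. V be * R_uuud rh ta si m * DW si rh ta be)"
    unfolding rhs2_def by (rule sum_swap_3)
  also have "\<dots> = (\<Sum>rh\<in>UNIV. \<Sum>ta\<in>UNIV. \<Sum>si\<in>UNIV. (1/3) * (R_uuud rh ta si m * (F si rh * Fxi ta) - R_uuud rh ta si m * (F si ta * Fxi rh) + R_uuud rh ta si m * (Fxi si * F rh ta)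
     + R_uuud rh ta si m * (w rh * Kxi si ta) - R_uuud rh ta si m * (w ta * Kxi si rh) + xi_norm2 * (R_uuud rh ta si m * K si rh ta)))"
    by (simp only: V_R_uuud_DW)
  also have "\<dots> = (1/3) * (R_F_Fxi m
     - (\<Sum>rh\<in>UNIV. \<Sum>ta\<in>UNIV. \<Sum>si\<in>UNIV. R_uuud rh ta si m * (F si ta * Fxi rh))
     + (\<Sum>rh\<in>UNIV. \<Sum>ta\<in>UNIV. \<Sum>si\<in>UNIV. R_uuud rh ta si m * (Fxi si * F rh ta))
     + R_w_Kxi m - (\<Sum>rh\<in>UNIV. \<Sum>ta\<in>UNIV. \<Sum>si\<in>UNIV. R_uuud rh ta si m * (w ta * Kxi si rh)) + xi_norm2 * R_K m)"
    unfolding R_F_Fxi_def R_w_Kxi_def R_K_def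
    by (simp only: sum.distrib sum_subtractf sum_distrib_left[symmetric])
  finally show ?thesis .
qed

lemma R_F_Fxi_swap: "(\<Sum>rh\<in>UNIV. \<Sum>ta\<in>UNIV. \<Sum>si\<in>UNIV. R_uuud rh ta si m * (F si ta * Fxi rh)) = - R_F_Fxi m"
proof -
  have "(\<Sum>rh\<in>UNIV. \<Sum>ta\<in>UNIV. \<Sum>si\<in>UNIV. R_uuud rh ta si m * (F si ta * Fxi rh))
     = (\<Sum>rh\<in>UNIV. \<Sum>ta\<in>UNIV. \<Sum>si\<in>UNIV. R_uuud ta rh si m * (F si rh * Fxi ta))"
    by (rule sum.swap)
  also have "\<dots> = - R_F_Fxi m"
    unfolding R_F_Fxi_def sum_negf[symmetric]
    apply (intro sum.cong refl)
    subgoal for rh ta si using R_uuud_anti[of ta rh si m] by simp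
    done
  finally show ?thesis .
qed

lemma R_w_Kxi_swap: "(\<Sum>rh\<in>UNIV. \<Sum>ta\<in>UNIV. \<Sum>si\<in>UNIV. R_uuud rh ta si m * (w ta * Kxi si rh)) = - R_w_Kxi m"
proof -
  have "(\<Sum>rh\<in>UNIV. \<Sum>ta\<in>UNIV. \<Sum>si\<in>UNIV. R_uuud rh ta si m * (w ta * Kxi si rh))
     = (\<Sum>rh\<in>UNIV. \<Sum>ta\<in>UNIV. \<Sum>si\<in>UNIV. R_uuud ta rh si m * (w rh * Kxi si ta))"
    by (rule sum.swap)
  also have "\<dots> = - R_w_Kxi m"
    unfolding R_w_Kxi_def sum_negf[symmetric]
    apply (intro sum.cong refl)
    subgoal for rh ta si using R_uuud_anti[of ta rh si m] by simp
    done
  finally show ?thesis .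
qed

lemma R_Fxi_F: "(\<Sum>rh\<in>UNIV. \<Sum>ta\<in>UNIV. \<Sum>si\<in>UNIV. R_uuud rh ta si m * (Fxi si * F rh ta)) = - 2 * R_F_Fxi m"
proof -
  define P where "P = (\<Sum>rh\<in>UNIV. \<Sum>ta\<in>UNIV. \<Sum>si\<in>UNIV. R_uuud ta si rh m * (Fxi si * F rh ta))"
  define Q where "Q = (\<Sum>rh\<in>UNIV. \<Sum>ta\<in>UNIV. \<Sum>si\<in>UNIV. R_uuud si rh ta m * (Fxi si * F rh ta))"
  have "(\<Sum>rh\<in>UNIV. \<Sum>ta\<in>UNIV. \<Sum>si\<in>UNIV. R_uuud rh ta si m * (Fxi si * F rh ta))
      = (\<Sum>rh\<in>UNIV. \<Sum>ta\<in>UNIV. \<Sum>si\<in>UNIV. - (R_uuud ta si rh m * (Fxi si * F rh ta)) - R_uuud si rh ta m * (Fxi si * F rh ta))"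
    apply (intro sum.cong refl)
    subgoal for rh ta si
    proof -
      have e: "R_uuud rh ta si m = - R_uuud ta si rh m - R_uuud si rh ta m" using R_uuud_cyclic[of rh ta si m] by linarith
      show ?thesis by (simp add: e algebra_simps)
    qed
    done
  also have "\<dots> = - P - Q" unfolding P_def Q_def by (simp only: sum_subtractf sum_negf)
  finally have 0: "(\<Sum>rh\<in>UNIV. \<Sum>ta\<in>UNIV. \<Sum>si\<in>UNIV. R_uuud rh ta si m * (Fxi si * F rh ta)) = - P - Q" .
  have p: "P = R_F_Fxi m"
  proof -
    have "P = (\<Sum>ta\<in>UNIV. \<Sum>si\<in>UNIV. \<Sum>rh\<in>UNIV. R_uuud ta si rh m * (Fxi si * F rh ta))"
      unfolding P_def by (rule sum_swap_2)
    also have "\<dots> = R_F_Fxi m" unfolding R_F_Fxi_def by (simp add: mult_ac)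
    finally show ?thesis .
  qed
  have q: "Q = R_F_Fxi m"
  proof -
    have "Q = (\<Sum>si\<in>UNIV. \<Sum>rh\<in>UNIV. \<Sum>ta\<in>UNIV. R_uuud si rh ta m * (Fxi si * F rh ta))"
      unfolding Q_def by (rule sum_swap_2[symmetric])
    also have "\<dots> = (\<Sum>rh\<in>UNIV. \<Sum>si\<in>UNIV. \<Sum>ta\<in>UNIV. R_uuud si rh ta m * (Fxi si * F rh ta))"
      by (rule sum.swap)
    also have "\<dots> = R_F_Fxi m"
      unfolding R_F_Fxi_def
      apply (intro sum.cong refl)
      subgoal for rh si ta using R_uuud_anti[of si rh ta m] F_anti[of rh ta] by simp
      done
    finally show ?thesis .
  qed
  show ?thesis using 0 p q by simp
qed

lemma rhs2_eq: "rhs2 m = (1/3) * (2 * R_w_Kxi m + xi_norm2 * R_K m)"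
  unfolding rhs2_decomp R_F_Fxi_swap R_Fxi_F R_w_Kxi_swap by (simp add: algebra_simps)

lemma RR1_xi3_contract:
  "RR1_xi3 m = (\<Sum>r\<in>UNIV. \<Sum>s\<in>UNIV. \<Sum>r'\<in>UNIV. \<Sum>s'\<in>UNIV. Rxixi r s * (h r r' * h s s' * Rxi r' m s'))"
proof -
  let ?b = "\<lambda>al be la r s r' s'. V al * V be * V la * (R al r la s * h r r' * h s s' * R be r' m s')"
  have "RR1_xi3 m = (\<Sum>al\<in>UNIV. \<Sum>be\<in>UNIV. \<Sum>la\<in>UNIV. \<Sum>r\<in>UNIV. \<Sum>s\<in>UNIV. \<Sum>r'\<in>UNIV. \<Sum>s'\<in>UNIV. ?b al be la r s r' s')"
    unfolding RR1_xi3_def RR1_def by (simp add: sum_distrib_left)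
  also have "\<dots> = (\<Sum>al\<in>UNIV. \<Sum>la\<in>UNIV. \<Sum>be\<in>UNIV. \<Sum>r\<in>UNIV. \<Sum>s\<in>UNIV. \<Sum>r'\<in>UNIV. \<Sum>s'\<in>UNIV. ?b al be la r s r' s')"
    by (rule sum.cong[OF refl], rule sum.swap)
  also have "\<dots> = (\<Sum>al\<in>UNIV. \<Sum>la\<in>UNIV. \<Sum>r\<in>UNIV. \<Sum>s\<in>UNIV. \<Sum>r'\<in>UNIV. \<Sum>s'\<in>UNIV. \<Sum>be\<in>UNIV. ?b al be la r s r' s')"
    by (rule sum.cong[OF refl], rule sum.cong[OF refl], rule sum_swap_4)
  also have "\<dots> = (\<Sum>al\<in>UNIV. \<Sum>r\<in>UNIV. \<Sum>s\<in>UNIV. \<Sum>r'\<in>UNIV. \<Sum>s'\<in>UNIV. \<Sum>la\<in>UNIV. \<Sum>be\<in>UNIV. ?b al be la r s r' s')"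
    by (rule sum.cong[OF refl], rule sum_swap_4)
  also have "\<dots> = (\<Sum>r\<in>UNIV. \<Sum>s\<in>UNIV. \<Sum>r'\<in>UNIV. \<Sum>s'\<in>UNIV. \<Sum>al\<in>UNIV. \<Sum>la\<in>UNIV. \<Sum>be\<in>UNIV. ?b al be la r s r' s')"
    by (rule sum_swap_4)
  also have "\<dots> = (\<Sum>r\<in>UNIV. \<Sum>s\<in>UNIV. \<Sum>r'\<in>UNIV. \<Sum>s'\<in>UNIV. Rxixi r s * (h r r' * h s s' * Rxi r' m s'))"
  proof (intro sum.cong refl)
    fix r s r' s'
    have "(\<Sum>al\<in>UNIV. \<Sum>la\<in>UNIV. \<Sum>be\<in>UNIV. ?b al be la r s r' s')
       = (\<Sum>al\<in>UNIV. \<Sum>la\<in>UNIV. (V al * V la * R al r la s) * (h r r' * h s s' * Rxi r' m s'))"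
      unfolding Rxi_def by (simp add: sum_distrib_left mult_ac)
    also have "\<dots> = Rxixi r s * (h r r' * h s s' * Rxi r' m s')"
      unfolding Rxixi_def by (simp add: sum_distrib_right)
    finally show "(\<Sum>al\<in>UNIV. \<Sum>la\<in>UNIV. \<Sum>be\<in>UNIV. ?b al be la r s r' s') = Rxixi r s * (h r r' * h s s' * Rxi r' m s')" .
  qed
  finally show ?thesis .
qed

lemma RR1_xi3_eq: "RR1_xi3 m = - Rxixi_K m"
proof -
  let ?c = "\<lambda>si ta b d. h si b * h ta d * Rxixi b d * Rxi ta si m"
  have "Rxixi_K m = (\<Sum>si\<in>UNIV. \<Sum>ta\<in>UNIV. \<Sum>b\<in>UNIV. \<Sum>d\<in>UNIV. ?c si ta b d)"
    unfolding Rxixi_K_def Rxixi_up_def K_eq_Rxi by (simp add: sum_distrib_right)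
  also have "\<dots> = (\<Sum>ta\<in>UNIV. \<Sum>b\<in>UNIV. \<Sum>d\<in>UNIV. \<Sum>si\<in>UNIV. ?c si ta b d)"
    by (rule sum_swap_3)
  also have "\<dots> = (\<Sum>b\<in>UNIV. \<Sum>d\<in>UNIV. \<Sum>ta\<in>UNIV. \<Sum>si\<in>UNIV. ?c si ta b d)"
    by (rule sum_swap_2)
  also have "\<dots> = (\<Sum>b\<in>UNIV. \<Sum>d\<in>UNIV. \<Sum>ta\<in>UNIV. \<Sum>si\<in>UNIV. ?c si ta d b)"
    by (rule sum.swap)
  also have "\<dots> = - RR1_xi3 m"
    unfolding RR1_xi3_contract sum_negf[symmetric]
    apply (intro sum.cong refl)
    subgoal for b d ta si using h_sym[of b ta] h_sym[of d si] Rxixi_sym[of b d] Rxi_anti[of ta m si] by simp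
    done
  finally show ?thesis by simp
qed

lemma w_R_uuud: "(\<Sum>rh\<in>UNIV. w rh * R_uuud rh ta si m) = (\<Sum>b\<in>UNIV. \<Sum>c\<in>UNIV. h ta b * h si c * Rxi b c m)"
proof -
  have "(\<Sum>rh\<in>UNIV. w rh * R_uuud rh ta si m)
     = (\<Sum>rh\<in>UNIV. w rh * (\<Sum>a\<in>UNIV. h rh a * (\<Sum>b\<in>UNIV. \<Sum>c\<in>UNIV. h ta b * h si c * R a b c m)))"
    unfolding R_uuud_def by (simp add: sum_distrib_left mult_ac)
  also have "\<dots> = (\<Sum>a\<in>UNIV. V a * (\<Sum>b\<in>UNIV. \<Sum>c\<in>UNIV. h ta b * h si c * R a b c m))"
    by (rule w_raise_sum)
  also have "\<dots> = (\<Sum>a\<in>UNIV. \<Sum>b\<in>UNIV. \<Sum>c\<in>UNIV. V a * (h ta b * h si c * R a b c m))"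
    by (simp add: sum_distrib_left)
  also have "\<dots> = (\<Sum>b\<in>UNIV. \<Sum>c\<in>UNIV. \<Sum>a\<in>UNIV. V a * (h ta b * h si c * R a b c m))"
    by (rule sum_swap_2)
  also have "\<dots> = (\<Sum>b\<in>UNIV. \<Sum>c\<in>UNIV. h ta b * h si c * Rxi b c m)"
    unfolding Rxi_def by (simp add: sum_distrib_left mult_ac)
  finally show ?thesis .
qed

lemma Kxi_eq: "Kxi s t = - Rxixi s t"
proof -
  have "Kxi s t = (\<Sum>b\<in>UNIV. \<Sum>e\<in>UNIV. V e * V b * R e s t b)"
    unfolding Kxi_def K_eq_Rxi Rxi_def by (simp add: sum_distrib_right sum_distrib_left mult_ac)
  also have "\<dots> = (\<Sum>e\<in>UNIV. \<Sum>b\<in>UNIV. V e * V b * R e s t b)" by (rule sum.swap)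
  also have "\<dots> = - Rxixi s t"
    unfolding Rxixi_def sum_negf[symmetric]
    apply (intro sum.cong refl)
    subgoal for e b using R_anti34[of e s t b] by simp
    done
  finally show ?thesis .
qed

lemma RR2_xi3_contract:
  "RR2_xi3 m = (\<Sum>r\<in>UNIV. \<Sum>s\<in>UNIV. \<Sum>r'\<in>UNIV. \<Sum>s'\<in>UNIV. Rxi r m s * (h r r' * h s s' * Rxixi r' s'))"
proof -
  let ?b = "\<lambda>al be la r s r' s'. V al * V be * V la * (R al r m s * h r r' * h s s' * R be r' la s')"
  have "RR2_xi3 m = (\<Sum>al\<in>UNIV. \<Sum>be\<in>UNIV. \<Sum>la\<in>UNIV. \<Sum>r\<in>UNIV. \<Sum>s\<in>UNIV. \<Sum>r'\<in>UNIV. \<Sum>s'\<in>UNIV. ?b al be la r s r' s')"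
    unfolding RR2_xi3_def RR2_def by (simp add: sum_distrib_left)
  also have "\<dots> = (\<Sum>al\<in>UNIV. \<Sum>be\<in>UNIV. \<Sum>r\<in>UNIV. \<Sum>s\<in>UNIV. \<Sum>r'\<in>UNIV. \<Sum>s'\<in>UNIV. \<Sum>la\<in>UNIV. ?b al be la r s r' s')"
    by (rule sum.cong[OF refl], rule sum.cong[OF refl], rule sum_swap_4)
  also have "\<dots> = (\<Sum>al\<in>UNIV. \<Sum>r\<in>UNIV. \<Sum>s\<in>UNIV. \<Sum>r'\<in>UNIV. \<Sum>s'\<in>UNIV. \<Sum>be\<in>UNIV. \<Sum>la\<in>UNIV. ?b al be la r s r' s')"
    by (rule sum.cong[OF refl], rule sum_swap_4)
  also have "\<dots> = (\<Sum>r\<in>UNIV. \<Sum>s\<in>UNIV. \<Sum>r'\<in>UNIV. \<Sum>s'\<in>UNIV. \<Sum>al\<in>UNIV. \<Sum>be\<in>UNIV. \<Sum>la\<in>UNIV. ?b al be la r s r' s')"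
    by (rule sum_swap_4)
  also have "\<dots> = (\<Sum>r\<in>UNIV. \<Sum>s\<in>UNIV. \<Sum>r'\<in>UNIV. \<Sum>s'\<in>UNIV. Rxi r m s * (h r r' * h s s' * Rxixi r' s'))"
  proof (intro sum.cong refl)
    fix r s r' s'
    have "(\<Sum>al\<in>UNIV. \<Sum>be\<in>UNIV. \<Sum>la\<in>UNIV. ?b al be la r s r' s')
       = (\<Sum>al\<in>UNIV. (V al * R al r m s) * (h r r' * h s s' * Rxixi r' s'))"
      unfolding Rxixi_def by (simp add: sum_distrib_left mult_ac)
    also have "\<dots> = Rxi r m s * (h r r' * h s s' * Rxixi r' s')"
      unfolding Rxi_def by (simp add: sum_distrib_right)
    finally show "(\<Sum>al\<in>UNIV. \<Sum>be\<in>UNIV. \<Sum>la\<in>UNIV. ?b al be la r s r' s') = Rxi r m s * (h r r' * h s s' * Rxixi r' s')" .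
  qed
  finally show ?thesis .
qed

lemma RR2_xi3_eq: "RR2_xi3 m = R_w_Kxi m"
proof -
  let ?c = "\<lambda>ta si b c. - (h ta b * h si c * Rxi b c m * Rxixi si ta)"
  have "R_w_Kxi m = (\<Sum>ta\<in>UNIV. \<Sum>si\<in>UNIV. \<Sum>rh\<in>UNIV. R_uuud rh ta si m * (w rh * Kxi si ta))"
    unfolding R_w_Kxi_def by (rule sum_swap_2)
  also have "\<dots> = (\<Sum>ta\<in>UNIV. \<Sum>si\<in>UNIV. (\<Sum>rh\<in>UNIV. w rh * R_uuud rh ta si m) * Kxi si ta)"
    by (simp add: sum_distrib_right sum_distrib_left mult_ac)
  also have "\<dots> = (\<Sum>ta\<in>UNIV. \<Sum>si\<in>UNIV. \<Sum>b\<in>UNIV. \<Sum>c\<in>UNIV. ?c ta si b c)"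
    unfolding w_R_uuud Kxi_eq by (simp add: sum_distrib_right sum_negf)
  also have "\<dots> = (\<Sum>si\<in>UNIV. \<Sum>b\<in>UNIV. \<Sum>c\<in>UNIV. \<Sum>ta\<in>UNIV. ?c ta si b c)"
    by (rule sum_swap_3)
  also have "\<dots> = (\<Sum>b\<in>UNIV. \<Sum>c\<in>UNIV. \<Sum>si\<in>UNIV. \<Sum>ta\<in>UNIV. ?c ta si b c)"
    by (rule sum_swap_2)
  also have "\<dots> = (\<Sum>b\<in>UNIV. \<Sum>c\<in>UNIV. \<Sum>si\<in>UNIV. \<Sum>ta\<in>UNIV. ?c si ta b c)"
    by (rule sum.cong[OF refl], rule sum.cong[OF refl], rule sum.swap)
  also have "\<dots> = RR2_xi3 m"
    unfolding RR2_xi3_contract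
    apply (intro sum.cong refl)
    subgoal for b c si ta using h_sym[of b si] h_sym[of c ta] Rxixi_sym[of si ta] Rxi_anti[of b m c] by simp
    done
  finally show ?thesis by simp
qed

lemma RR34_xi_eq: "RR34_xi m = - R_K m"
proof -
  let ?b = "\<lambda>la r t s r' t' s'. V la * (R r t la s * h r r' * h t t' * h s s' * R r' t' m s')"
  have "RR34_xi m = (\<Sum>la\<in>UNIV. \<Sum>r\<in>UNIV. \<Sum>t\<in>UNIV. \<Sum>s\<in>UNIV. \<Sum>r'\<in>UNIV. \<Sum>t'\<in>UNIV. \<Sum>s'\<in>UNIV. ?b la r t s r' t' s')"
    unfolding RR34_xi_def RR34_def by (simp add: sum_distrib_left)
  also have "\<dots> = (\<Sum>r\<in>UNIV. \<Sum>t\<in>UNIV. \<Sum>s\<in>UNIV. \<Sum>r'\<in>UNIV. \<Sum>t'\<in>UNIV. \<Sum>s'\<in>UNIV. \<Sum>la\<in>UNIV. ?b la r t s r' t' s')"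
    by (rule sum_swap_6)
  also have "\<dots> = (\<Sum>r\<in>UNIV. \<Sum>t\<in>UNIV. \<Sum>s\<in>UNIV. \<Sum>r'\<in>UNIV. \<Sum>t'\<in>UNIV. \<Sum>s'\<in>UNIV.
       Rxi s r t * (h r r' * h t t' * h s s' * R r' t' m s'))"
  proof (intro sum.cong refl)
    fix r t s r' t' s'
    show "(\<Sum>la\<in>UNIV. ?b la r t s r' t' s') = Rxi s r t * (h r r' * h t t' * h s s' * R r' t' m s')"
      unfolding Rxi_def by (simp add: R_pair_sym[of r t _ s] sum_distrib_right sum_distrib_left mult_ac)
  qed
  also have "\<dots> = - R_K m"
    unfolding R_K_def R_uuud_def K_eq_Rxi sum_negf[symmetric] sum_distrib_right
    apply (intro sum.cong refl)
    subgoal for r t s r' t' s' using R_anti34[of r' t' m s'] by simp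
    done
  finally show ?thesis .
qed

theorem bel_identity_algebraic:
  "(\<Sum>al\<in>UNIV. \<Sum>be\<in>UNIV. \<Sum>la\<in>UNIV. V al * V be * V la *
            (1/2) * (Bel al be la mu * w ga - Bel al be la ga * w mu))
       = (3/2) * (rhs1 mu ga
         + (\<Sum>be\<in>UNIV. \<Sum>rh\<in>UNIV. \<Sum>ta\<in>UNIV. \<Sum>si\<in>UNIV.
              V be * (1/2) * (R_uuud rh ta si mu * w ga - R_uuud rh ta si ga * w mu) * DW si rh ta be))"
  unfolding lhs_eq_Bel_xi3 rhs_second_eq_rhs2 rhs1_eq Bel_xi3_decomp RR1_xi3_eq RR2_xi3_eq RR34_xi_eq rhs2_eq
  by (simp add: algebra_simps)

end

context killing_chart
begin

sublocale killing_algebra "\<lambda>a b. g x $ a $ b" "ginv g x" "riem g x" "\<lambda>a. V x $ a" "lower g V x"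
  "nabla_xi x" nabla2_xi
proof
  show "g x $ a $ b = g x $ b $ a" for a b by (rule metric_sym[OF x_in_U])
  show "ginv g x a b = ginv g x b a" for a b by (rule ginv_sym[OF x_in_U])
  show "(\<Sum>b\<in>UNIV. g x $ a $ b * ginv g x b c) = (if a = c then 1 else 0)" for a c
    by (rule metric_ginv[OF x_in_U])
  show "lower g V x a = (\<Sum>b\<in>UNIV. g x $ a $ b * V x $ b)" for a by (simp add: lower_def)
  show "riem g x a b c d = - riem g x b a c d" for a b c d by (rule riem_anti12)
  show "riem g x a b c d = - riem g x a b d c" for a b c d by (rule riem_anti34)
  show "riem g x a b c d + riem g x b c a d + riem g x c a b d = 0" for a b c d by (rule riem_cyclic)
  show "nabla_xi x a b = - nabla_xi x b a" for a b
    using killing_V x_in_U unfolding killing_def by (simp add: eq_neg_iff_add_eq_0)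
  show "nabla2_xi t p q = - (\<Sum>e\<in>UNIV. riem g x p q t e * V x $ e)" for t p q
    by (rule killing_cov_cov)
qed

lemma bel_eq_Bel: "bel g x al be la mu = Bel al be la mu"
  by (simp add: bel_def Bel_def RR1_def RR2_def RR34_def RR12_def kretschmann_def)

lemma riem_up_eq_R_up: "riem_up g x a b c d = R_up a b c d"
  by (simp add: riem_up_def R_up_def)

lemma riem_uuud_eq_R_uuud: "riem_uuud g x a b c d = R_uuud a b c d"
  by (simp add: riem_uuud_def R_uuud_def)

lemma cov_xi_dxi_eq_DW: "cov g (xi_dxi g V) x [t, a, b, c] = DW t a b c"
  by (simp add: cov_xi_dxi DW_def)

end

theorem mainTheorem1:
  fixes U :: "pt set" and g :: "pt \<Rightarrow> real ^ 4 ^ 4" and V :: "pt \<Rightarrow> real ^ 4"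
  assumes "lorentzian_metric U g"
    and "killing U g V"
    and "x \<in> U"
  shows "(\<Sum>al\<in>UNIV. \<Sum>be\<in>UNIV. \<Sum>la\<in>UNIV. V x $ al * V x $ be * V x $ la *
            (1/2) * (bel g x al be la mu * lower g V x ga - bel g x al be la ga * lower g V x mu))
       = (3/2) * (
           (\<Sum>la\<in>UNIV. \<Sum>si\<in>UNIV. \<Sum>be\<in>UNIV. \<Sum>ta\<in>UNIV.
              lower g V x la * lower g V x be * riem_up g x la si be ta
              * cov g (xi_dxi g V) x [ta, mu, si, ga])
         + (\<Sum>be\<in>UNIV. \<Sum>rh\<in>UNIV. \<Sum>ta\<in>UNIV. \<Sum>si\<in>UNIV.
              V x $ be * (1/2) * (riem_uuud g x rh ta si mu * lower g V x ga
                                 - riem_uuud g x rh ta si ga * lower g V x mu)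
              * cov g (xi_dxi g V) x [si, rh, ta, be]))"
proof -
  interpret killing_chart U g V x
    using assms by unfold_locales
  show ?thesis
    unfolding bel_eq_Bel riem_up_eq_R_up riem_uuud_eq_R_uuud cov_xi_dxi_eq_DW
    using bel_identity_algebraic[of mu ga] unfolding rhs1_def .
qed

end
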